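(* Let $m=rn$. There is a bijection between $\overline G_r(U,V;d)$ and the set of walks in $\widetilde W(d,2m;\vec 0)$ all of whose points lie in the region $\{x\in\mathbb Z^d: x_1\ge x_2\ge\cdots\ge x_d\}$.
   Context: Fix integers $n,r,d\ge1$, $m=rn$. $U=\{u_1\prec\cdots\prec u_n\}$, $V=\{v_1\prec\cdots\prec v_n\}$ are disjoint totally ordered sets. An $r$-regular bipartite multigraph on $(U,V)$ is a multiset of edges $uv$ in which every vertex has degree $r$. Edges $uv,u'v'$ are noncrossing if ($u\prec u'$ and $v\prec v'$) or ($u'\prec u$ and $v'\prec v$); a planar matching is a set of pairwise noncrossing edges; $L(G)$ is the maximum size of a planar matching; $G_r(U,V;d)$ is the set of $r$-regular multigraphs $G$ with $L(G)\le d$. Let $\overline U=U\times[r]$, $\overline V=V\times[r]$ (write $u^s$ for $(u,s)$), ordered lexicographically. An $r$-configuration is a bijection between $\overline U$ and $\overline V$. For $G$ an $r$-regular multigraph, its associated configuration $\overline G$: for each edge $uv$ of $G$ of multiplicity $t\ge1$, let $i$ be the number of edges $uv'$ of $G$ (with multiplicity) with $v\prec v'$, $j$ the number of edges $u'v$ with $u\prec u'$; $\overline G$ contains the pairs $(u^{i+s},v^{j+t-s+1})$, $s=1,\dots,t$. $\overline G_r(U,V;d)=\{\overline G:G\in G_r(U,V;d)\}$. Walks: $W^*(d,2m;P)$ is the set of walks in $\mathbb Z^d$ from the origin with steps $e_{a_1},\dots,e_{a_m},-e_{b_1},\dots,-e_{b_m}$ ($a_i,b_i\in[d]$) ending in $P$,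 written $a_1\cdots a_m|b_1\cdots b_m$; write $a_{u_i^s}=a_{r(i-1)+s}$, $b_{v_i^s}=b_{r(i-1)+s}$. $W'(d,2m;P)$ is the set of such walks with $a_{u^s}\ge a_{u^{s+1}}$ and $b_{v^s}\ge b_{v^{s+1}}$ for all $u\in U,v\in V$, $1\le s<r$. For $w=a_1\cdots a_m|b_1\cdots b_m\in W'(d,2m;\vec 0)$ let $\tilde w=a_1\cdots a_m|b_m b_{m-1}\cdots b_1$ (the negative steps taken in reverse order), and $\widetilde W(d,2m;\vec 0)=\{\tilde w: w\in W'(d,2m;\vec 0)\}$. A walk stays in a region if all its visited lattice points (including start and end) lie in it. *)

theory Defs
  imports Main
begin

text \<open>Vertices: U = {u_1,...,u_n} and V = {v_1,...,v_n} are represented by the indices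
  1..n (two separate copies, i.e. the first resp. second component of an edge),
  ordered by the natural order. An r-regular bipartite multigraph is given by its
  multiplicity function G u v = number of copies of edge u_u v_v.\<close>

definition regular_multigraph :: "nat \<Rightarrow> nat \<Rightarrow> (nat \<Rightarrow> nat \<Rightarrow> nat) \<Rightarrow> bool" where
  "regular_multigraph n r G \<longleftrightarrow>
     (\<forall>u v. (u \<notin> {1..n} \<or> v \<notin> {1..n}) \<longrightarrow> G u v = 0) \<and>
     (\<forall>u\<in>{1..n}. (\<Sum>v\<in>{1..n}. G u v) = r) \<and>
     (\<forall>v\<in>{1..n}. (\<Sum>u\<in>{1..n}. G u v) = r)"

definition noncrossing :: "nat \<times> nat \<Rightarrow> nat \<times> nat \<Rightarrow> bool" where
  "noncrossing e e' \<longleftrightarrow>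
     (fst e < fst e' \<and> snd e < snd e') \<or> (fst e' < fst e \<and> snd e' < snd e)"

definition planar_matching :: "(nat \<Rightarrow> nat \<Rightarrow> nat) \<Rightarrow> (nat \<times> nat) set \<Rightarrow> bool" where
  "planar_matching G M \<longleftrightarrow>
     M \<subseteq> {(u, v). G u v > 0} \<and>
     (\<forall>e\<in>M. \<forall>e'\<in>M. e \<noteq> e' \<longrightarrow> noncrossing e e')"

definition L :: "(nat \<Rightarrow> nat \<Rightarrow> nat) \<Rightarrow> nat" where
  "L G = Max {card M | M. planar_matching G M}"

definition multigraphs :: "nat \<Rightarrow> nat \<Rightarrow> nat \<Rightarrow> (nat \<Rightarrow> nat \<Rightarrow> nat) set" where
  "multigraphs n r d = {G. regular_multigraph n r G \<and> L G \<le> d}"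

text \<open>Associated configuration: a set of pairs ((u,s),(v,t)) with u^s in U x [r],
  v^t in V x [r].\<close>

definition assoc_config :: "nat \<Rightarrow> (nat \<Rightarrow> nat \<Rightarrow> nat) \<Rightarrow> ((nat \<times> nat) \<times> (nat \<times> nat)) set" where
  "assoc_config n G =
     {((u, (\<Sum>v'\<in>{v<..n}. G u v') + s), (v, (\<Sum>u'\<in>{u<..n}. G u' v) + G u v - s + 1)) | u v s.
        u \<in> {1..n} \<and> v \<in> {1..n} \<and> G u v \<ge> 1 \<and> 1 \<le> s \<and> s \<le> G u v}"

definition configs :: "nat \<Rightarrow> nat \<Rightarrow> nat \<Rightarrow> ((nat \<times> nat) \<times> (nat \<times> nat)) set set" where
  "configs n r d = assoc_config n ` multigraphs n r d"

text \<open>Walks a_1...a_m | b_1...b_m are pairs of lists (as, bs) of length m. The position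
  after k steps (0 \<le> k \<le> 2m): the first m steps are +e_{a_i}, then -e_{b_i}.\<close>

definition pos :: "nat list \<times> nat list \<Rightarrow> nat \<Rightarrow> nat \<Rightarrow> int" where
  "pos w k c = int (count_list (take k (fst w)) c)
              - int (count_list (take (k - length (fst w)) (snd w)) c)"

definition walks_star :: "nat \<Rightarrow> nat \<Rightarrow> (nat list \<times> nat list) set" where
  "walks_star d m = {(as, bs). length as = m \<and> length bs = m \<and>
       set as \<subseteq> {1..d} \<and> set bs \<subseteq> {1..d} \<and>
       (\<forall>c\<in>{1..d}. pos (as, bs) (2 * m) c = 0)}"

text \<open>W'(d, 2m; 0) with m = r n: a_{u_i^s} = as ! (r(i-1)+s-1) (0-based lists).\<close>

definition walks_prime :: "nat \<Rightarrow> nat \<Rightarrow> nat \<Rightarrow> (nat list \<times> nat list) set" where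
  "walks_prime n r d = {(as, bs) \<in> walks_star d (r * n).
       (\<forall>i\<in>{1..n}. \<forall>s. 1 \<le> s \<and> s < r \<longrightarrow>
          as ! (r * (i - 1) + s - 1) \<ge> as ! (r * (i - 1) + s) \<and>
          bs ! (r * (i - 1) + s - 1) \<ge> bs ! (r * (i - 1) + s))}"

definition walks_tilde :: "nat \<Rightarrow> nat \<Rightarrow> nat \<Rightarrow> (nat list \<times> nat list) set" where
  "walks_tilde n r d = (\<lambda>(as, bs). (as, rev bs)) ` walks_prime n r d"

definition weyl_chamber :: "nat \<Rightarrow> (nat \<Rightarrow> int) set" where
  "weyl_chamber d = {x. \<forall>c. 1 \<le> c \<and> c < d \<longrightarrow> x c \<ge> x (Suc c)}"

definition stays_in :: "(nat list \<times> nat list) \<Rightarrow> (nat \<Rightarrow> int) set \<Rightarrow> bool" where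
  "stays_in w R \<longleftrightarrow> (\<forall>k \<le> length (fst w) + length (snd w). pos w k \<in> R)"

end

theory Submission
  imports Defs "HOL-Library.Multiset"
begin

text \<open>Fomin's growth diagrams for the Robinson-Schensted-Knuth correspondence. Label the lattice
  points \<open>(i, j)\<close> of the \<open>n \<times> n\<close> grid by partitions, empty on the left and bottom edges,
  applying the local rule for \<open>\<nat>\<close>-matrices in every cell of \<open>G\<close>. The partition at \<open>(i, j)\<close>
  then has size \<open>\<Sum>u\<le>i. \<Sum>v\<le>j. G u v\<close>, and its number of rows is the size of the largest
  planar matching there (Schensted). For \<open>G\<close> \<open>r\<close>-regular with \<open>L G \<le> d\<close>, the top and right edges
  are chains of horizontal strips of size \<open>r\<close> with at most \<open>d\<close> rows. Writing each strip as a
  decreasing word turns the two chains into lattice words, which are the two halves of a walk in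
  the chamber \<open>x\<^sub>1 \<ge> \<dots> \<ge> x\<^sub>d\<close>; it returns to the origin because both chains end at the
  corner. The local rule is invertible, so the diagram, and with it \<open>G\<close>, is recovered from its
  top and right edges. Finally, a regular multigraph is determined by its configuration.\<close>

section \<open>Horizontal strips and the local rule\<close>

text \<open>A partition is a function \<open>nat \<Rightarrow> nat\<close> whose value at \<open>k\<close> is its \<open>(k+1)\<close>-st row;
  \<open>horizontal_strip p q\<close> says that \<open>q/p\<close> is a horizontal strip, i.e. \<open>p\<close> and \<open>q\<close> interlace.\<close>

definition horizontal_strip :: "(nat \<Rightarrow> nat) \<Rightarrow> (nat \<Rightarrow> nat) \<Rightarrow> bool" where
  "horizontal_strip p q \<longleftrightarrow> (\<forall>k. p k \<le> q k) \<and> (\<forall>k. q (Suc k) \<le> p k)"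

text \<open>Fomin's local rule for growth diagrams of \<open>\<nat>\<close>-matrices, in carry form. In a cell with lower
  left corner \<open>\<rho>\<close>, upper right corner \<open>l\<close> and \<open>s = \<mu> + \<nu>\<close> for the other two corners, the
  entry enters as \<open>c K\<close> at a row \<open>K\<close> above all parts; row \<open>k\<close> of \<open>l\<close> gets \<open>s k - \<rho> k\<close> plus the
  \<open>c (Suc k)\<close> boxes passed down from row \<open>k + 1\<close>, capped at \<open>\<rho> (k - 1)\<close>, and passes the
  excess \<open>c k\<close> on to row \<open>k - 1\<close>.\<close>

definition local_rule :: "(nat \<Rightarrow> nat) \<Rightarrow> (nat \<Rightarrow> nat) \<Rightarrow> (nat \<Rightarrow> nat) \<Rightarrow> (nat \<Rightarrow> nat) \<Rightarrow> bool" where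
  "local_rule s \<rho> l c \<longleftrightarrow> c 0 = 0 \<and> (\<forall>k. l k + \<rho> k + c k = s k + c (Suc k)) \<and>
     (\<forall>k. l (Suc k) \<le> \<rho> k) \<and> (\<forall>k. 0 < c (Suc k) \<longrightarrow> l (Suc k) = \<rho> k)"

lemma horizontal_stripD:
  "horizontal_strip p q \<Longrightarrow> p k \<le> q k" "horizontal_strip p q \<Longrightarrow> q (Suc k) \<le> p k"
  unfolding horizontal_strip_def by auto

lemma horizontal_strip_zero: "horizontal_strip (\<lambda>_. 0) (\<lambda>_. 0)"
  unfolding horizontal_strip_def by simp

lemma horizontal_strip_zero_upwards:
  assumes "horizontal_strip p q" "q t = 0" "t \<le> k"
  shows "q k = 0"
  using assms(3)
proof (induction k rule: dec_induct)
  case base then show ?case using assms(2) .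
next
  case (step k)
  then show ?case using horizontal_stripD[OF assms(1), of k] by simp
qed

lemma local_ruleD:
  assumes "local_rule s \<rho> l c"
  shows "c 0 = 0" "l k + \<rho> k + c k = s k + c (Suc k)" "l (Suc k) \<le> \<rho> k"
    "0 < c (Suc k) \<Longrightarrow> l (Suc k) = \<rho> k"
  using assms unfolding local_rule_def by auto

lemma local_rule_size:
  assumes "local_rule s \<rho> l c"
  shows "(\<Sum>k<N. l k + \<rho> k) = (\<Sum>k<N. s k) + c N"
proof (induction N)
  case 0 then show ?case using local_ruleD(1)[OF assms] by simp
next
  case (Suc N) then show ?case using local_ruleD(2)[OF assms, of N] by simp
qed

lemma local_rule_carry_const:
  assumes "local_rule s \<rho> l c" "\<forall>k\<ge>t. l k = 0 \<and> \<rho> k = 0 \<and> s k = 0" "t \<le> k"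
  shows "c k = c t"
  using assms(3)
proof (induction k rule: dec_induct)
  case base then show ?case by simp
next
  case (step k)
  then show ?case using local_ruleD(2)[OF assms(1), of k] assms(2) by auto
qed

lemma local_rule_unique_back:
  assumes "local_rule s \<rho> l c" "local_rule s \<rho>' l c'"
  shows "\<rho> = \<rho>' \<and> c = c'"
proof -
  have c: "c k = c' k" for k
  proof (induction k)
    case 0
    show ?case using local_ruleD(1)[OF assms(1)] local_ruleD(1)[OF assms(2)] by simp
  next
    case (Suc k)
    note rules = local_ruleD(2-4)[OF assms(1), of k] local_ruleD(2-4)[OF assms(2), of k]
    show ?case
    proof (rule ccontr)
      assume "c (Suc k) \<noteq> c' (Suc k)"
      then consider "c' (Suc k) < c (Suc k)" | "c (Suc k) < c' (Suc k)" by linarith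
      then show False
      proof cases
        case 1 with rules Suc show False by linarith
      next
        case 2 with rules Suc show False by linarith
      qed
    qed
  qed
  have "\<rho> k = \<rho>' k" for k
    using local_ruleD(2)[OF assms(1), of k] local_ruleD(2)[OF assms(2), of k] c[of k] c[of "Suc k"]
    by linarith
  with c show ?thesis by auto
qed

lemma local_rule_unique_forward:
  assumes "local_rule s \<rho> l c" "local_rule s \<rho> l' c'"
    and "\<forall>k\<ge>K. l k = 0 \<and> l' k = 0 \<and> \<rho> k = 0 \<and> s k = 0" and "c K = c' K"
  shows "l = l' \<and> c = c'"
proof -
  have above: "c k = c' k" if "K \<le> k" for k
    using local_rule_carry_const[OF assms(1), of K k] local_rule_carry_const[OF assms(2), of K k]
      assms(3,4) that by auto
  have below: "c k = c' k" if "k \<le> K" for k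
    using that
  proof (induction k rule: inc_induct)
    case base then show ?case using assms(4) .
  next
    case (step k)
    note e = local_ruleD(2)[OF assms(1), of k] local_ruleD(2)[OF assms(2), of k]
    show ?case
    proof (cases k)
      case 0 then show ?thesis using local_ruleD(1)[OF assms(1)] local_ruleD(1)[OF assms(2)] by auto
    next
      case (Suc k0)
      have "l k \<le> \<rho> k0" "l' k \<le> \<rho> k0" "0 < c k \<Longrightarrow> l k = \<rho> k0" "0 < c' k \<Longrightarrow> l' k = \<rho> k0"
        using local_ruleD(3,4)[OF assms(1), of k0] local_ruleD(3,4)[OF assms(2), of k0] Suc by auto
      with e step show ?thesis by linarith
    qed
  qed
  have c: "c k = c' k" for k using above below by (metis le_cases)
  have "l k = l' k" for k
    using local_ruleD(2)[OF assms(1), of k] local_ruleD(2)[OF assms(2), of k] c[of k] c[of "Suc k"]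
    by linarith
  with c show ?thesis by auto
qed

text \<open>Given \<open>s\<close> and \<open>l\<close>, the rule is solved for \<open>\<rho>\<close> and \<open>c\<close> from row \<open>0\<close> upwards: \<open>\<rho> k\<close> is
  the least value allowed, \<open>l (Suc k)\<close>, unless the balance of row \<open>k\<close> forces it to be larger.\<close>

fun back_carry :: "(nat \<Rightarrow> nat) \<Rightarrow> (nat \<Rightarrow> nat) \<Rightarrow> nat \<Rightarrow> nat" where
  "back_carry s l 0 = 0"
| "back_carry s l (Suc k) =
     nat (max (int (s k) - int (l k) - int (back_carry s l k)) (int (l (Suc k)))
       - (int (s k) - int (l k) - int (back_carry s l k)))"

definition back_shape :: "(nat \<Rightarrow> nat) \<Rightarrow> (nat \<Rightarrow> nat) \<Rightarrow> nat \<Rightarrow> nat" where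
  "back_shape s l k = nat (max (int (s k) - int (l k) - int (back_carry s l k)) (int (l (Suc k))))"

lemma local_rule_back: "local_rule s (back_shape s l) l (back_carry s l)"
  unfolding local_rule_def back_shape_def by auto

text \<open>Given \<open>s\<close>, \<open>\<rho>\<close> and the entry \<open>x\<close>, the rule is solved for \<open>l\<close> and \<open>c\<close> from row \<open>K\<close>
  downwards.\<close>

function fwd_carry :: "nat \<Rightarrow> (nat \<Rightarrow> nat) \<Rightarrow> (nat \<Rightarrow> nat) \<Rightarrow> nat \<Rightarrow> nat \<Rightarrow> nat" where
  "fwd_carry K s \<rho> x k =
     (if K \<le> k then x else if k = 0 then 0
      else s k - \<rho> k + fwd_carry K s \<rho> x (Suc k) - \<rho> (k - 1))"
  by auto
termination by (relation "measure (\<lambda>(K, _, _, _, k). K - k)") auto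

declare fwd_carry.simps[simp del]

definition fwd_shape :: "nat \<Rightarrow> (nat \<Rightarrow> nat) \<Rightarrow> (nat \<Rightarrow> nat) \<Rightarrow> nat \<Rightarrow> nat \<Rightarrow> nat" where
  "fwd_shape K s \<rho> x k = s k - \<rho> k + fwd_carry K s \<rho> x (Suc k) - fwd_carry K s \<rho> x k"

lemma local_rule_forward:
  assumes K: "1 \<le> K" and \<rho>s: "\<forall>k. \<rho> k \<le> s k" and sK: "\<forall>k\<ge>K. s k = 0"
    and \<rho>K: "\<forall>k. K - 1 \<le> k \<longrightarrow> \<rho> k = 0"
  shows "local_rule s \<rho> (fwd_shape K s \<rho> x) (fwd_carry K s \<rho> x)"
    "fwd_carry K s \<rho> x K = x" "\<forall>k\<ge>K. fwd_shape K s \<rho> x k = 0"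
proof -
  let ?c = "fwd_carry K s \<rho> x" and ?l = "fwd_shape K s \<rho> x"
  have above: "?c k = x" if "K \<le> k" for k using that by (simp add: fwd_carry.simps)
  then show "?c K = x" by simp
  have c0: "?c 0 = 0" using K by (simp add: fwd_carry.simps)
  have le: "?c k \<le> s k - \<rho> k + ?c (Suc k)" for k
    by (cases "K \<le> k") (auto simp: above fwd_carry.simps[of K s \<rho> x k])
  have eq: "?l k + \<rho> k + ?c k = s k + ?c (Suc k)" for k
    using le[of k] \<rho>s[rule_format, of k] unfolding fwd_shape_def by linarith
  have cap: "?l (Suc k) \<le> \<rho> k \<and> (0 < ?c (Suc k) \<longrightarrow> ?l (Suc k) = \<rho> k)" for k
  proof (cases "Suc k < K")
    case True
    then show ?thesis unfolding fwd_shape_def by (auto simp: fwd_carry.simps[of K s \<rho> x "Suc k"])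
  next
    case False
    then have "s (Suc k) = 0" "\<rho> (Suc k) = 0" "\<rho> k = 0" using sK \<rho>K by auto
    then show ?thesis using above[of "Suc k"] above[of "Suc (Suc k)"] False unfolding fwd_shape_def by auto
  qed
  show "local_rule s \<rho> ?l ?c" unfolding local_rule_def using c0 eq cap by auto
  show "\<forall>k\<ge>K. ?l k = 0" using sK \<rho>K above unfolding fwd_shape_def by auto
qed

lemma local_rule_forward_strips:
  assumes R: "local_rule (\<lambda>k. \<mu> k + \<nu> k) \<rho> l c"
    and h1: "horizontal_strip \<rho> \<mu>" and h2: "horizontal_strip \<rho> \<nu>"
  shows "horizontal_strip \<mu> l" "horizontal_strip \<nu> l"
proof -
  have ge: "\<mu> k \<le> l k \<and> \<nu> k \<le> l k" for k
  proof (cases "c k = 0")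
    case True
    then show ?thesis
      using local_ruleD(2)[OF R, of k] horizontal_stripD(1)[OF h1, of k] horizontal_stripD(1)[OF h2, of k]
      by simp
  next
    case False
    then obtain k0 where k: "k = Suc k0" using local_ruleD(1)[OF R] by (cases k) auto
    then have "l k = \<rho> k0" using local_ruleD(4)[OF R, of k0] False by simp
    then show ?thesis using k horizontal_stripD(2)[OF h1, of k0] horizontal_stripD(2)[OF h2, of k0] by simp
  qed
  have le: "l (Suc k) \<le> \<mu> k \<and> l (Suc k) \<le> \<nu> k" for k
    using local_ruleD(3)[OF R, of k] horizontal_stripD(1)[OF h1, of k] horizontal_stripD(1)[OF h2, of k]
    by simp
  show "horizontal_strip \<mu> l" "horizontal_strip \<nu> l" unfolding horizontal_strip_def using ge le by auto
qed

lemma local_rule_backward_strips: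
  assumes R: "local_rule (\<lambda>k. \<mu> k + \<nu> k) \<rho> l c"
    and h1: "horizontal_strip \<mu> l" and h2: "horizontal_strip \<nu> l"
  shows "horizontal_strip \<rho> \<mu>" "horizontal_strip \<rho> \<nu>"
proof -
  have le: "\<rho> k \<le> \<mu> k \<and> \<rho> k \<le> \<nu> k" for k
  proof (cases "c (Suc k) = 0")
    case True
    then show ?thesis
      using local_ruleD(2)[OF R, of k] horizontal_stripD(1)[OF h1, of k] horizontal_stripD(1)[OF h2, of k]
      by simp
  next
    case False
    then have "\<rho> k = l (Suc k)" using local_ruleD(4)[OF R, of k] by simp
    then show ?thesis using horizontal_stripD(2)[OF h1, of k] horizontal_stripD(2)[OF h2, of k] by simp
  qed
  have ge: "\<mu> (Suc k) \<le> \<rho> k \<and> \<nu> (Suc k) \<le> \<rho> k" for k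
    using local_ruleD(3)[OF R, of k] horizontal_stripD(1)[OF h1, of "Suc k"]
      horizontal_stripD(1)[OF h2, of "Suc k"]
    by simp
  show "horizontal_strip \<rho> \<mu>" "horizontal_strip \<rho> \<nu>" unfolding horizontal_strip_def using ge le by auto
qed

lemma local_rule_shape_zeroD:
  assumes R: "local_rule (\<lambda>k. \<mu> k + \<nu> k) \<rho> l c"
    and h1: "horizontal_strip \<rho> \<mu>" and h2: "horizontal_strip \<rho> \<nu>"
    and bound: "\<forall>k\<ge>K. \<mu> k = 0 \<and> \<nu> k = 0 \<and> l k = 0" and lt: "l t = 0"
  shows "\<mu> t = 0" "\<nu> t = 0" "0 < c K \<Longrightarrow> 0 < t \<and> \<rho> (t - 1) = 0"
proof -
  note strips = local_rule_forward_strips[OF R h1 h2]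
  have \<rho>\<mu>: "\<rho> k \<le> \<mu> k" for k using horizontal_stripD(1)[OF h1] .
  show \<mu>t: "\<mu> t = 0" "\<nu> t = 0"
    using horizontal_stripD(1)[OF strips(1), of t] horizontal_stripD(1)[OF strips(2), of t] lt by auto
  have zero_above_t: "\<forall>k\<ge>t. l k = 0 \<and> \<rho> k = 0 \<and> \<mu> k + \<nu> k = 0"
    using horizontal_strip_zero_upwards[OF strips(1) lt] horizontal_strip_zero_upwards[OF h1 \<mu>t(1)]
      horizontal_strip_zero_upwards[OF h2 \<mu>t(2)] \<rho>\<mu>
    by (metis add_is_0 le_zero_eq)
  have zero_above_K: "\<forall>k\<ge>K. l k = 0 \<and> \<rho> k = 0 \<and> \<mu> k + \<nu> k = 0"
    using bound \<rho>\<mu> by (metis add_is_0 le_zero_eq)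
  have ct: "c t = c K"
    using local_rule_carry_const[OF R zero_above_t, of K] local_rule_carry_const[OF R zero_above_K, of t]
    by (cases "t \<le> K") auto
  assume "0 < c K"
  then have ctp: "0 < c t" using ct by simp
  then obtain t0 where t0: "t = Suc t0" using local_ruleD(1)[OF R] by (cases t) auto
  then show "0 < t \<and> \<rho> (t - 1) = 0" using local_ruleD(4)[OF R, of t0] ctp lt by simp
qed

lemma local_rule_shape_zeroI:
  assumes R: "local_rule (\<lambda>k. \<mu> k + \<nu> k) \<rho> l c"
    and h1: "horizontal_strip \<rho> \<mu>" and h2: "horizontal_strip \<rho> \<nu>"
    and bound: "\<forall>k\<ge>K. \<mu> k = 0 \<and> \<nu> k = 0 \<and> l k = 0"
    and zero: "\<mu> t = 0" "\<nu> t = 0" and carry: "0 < c K \<Longrightarrow> 0 < t \<and> \<rho> (t - 1) = 0"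
  shows "l t = 0"
proof (cases "0 < c K")
  case True
  then obtain t0 where t0: "t = Suc t0" "\<rho> t0 = 0" using carry by (cases t) auto
  then show ?thesis using local_ruleD(3)[OF R, of t0] by simp
next
  case False
  show ?thesis
  proof (cases "K \<le> t")
    case True then show ?thesis using bound by simp
  next
    case tK: False
    have z: "\<mu> k = 0 \<and> \<nu> k = 0 \<and> \<rho> k = 0" if "t \<le> k" for k
      using horizontal_strip_zero_upwards[OF h1 _ that] horizontal_strip_zero_upwards[OF h2 _ that] zero
        horizontal_stripD(1)[OF h1, of k]
      by (metis le_zero_eq)
    have passes: "l k + c k = c (Suc k)" if "t \<le> k" for k
      using local_ruleD(2)[OF R, of k] z[OF that] by simp
    have mono: "c (Suc t) \<le> c k" if "Suc t \<le> k" for k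
      using that
    proof (induction k rule: dec_induct)
      case base then show ?case by simp
    next
      case (step k) then show ?case using passes[of k] by simp
    qed
    have "l t \<le> c (Suc t)" using passes[of t] by simp
    also have "\<dots> \<le> c K" using mono tK by simp
    finally show ?thesis using False by simp
  qed
qed

section \<open>Growth diagrams\<close>

text \<open>\<open>growth K G i j\<close> is the partition at the lattice point \<open>(i, j)\<close> of the growth diagram of
  the matrix \<open>G\<close>; \<open>K\<close> bounds the number of rows that are ever used.\<close>

fun growth :: "nat \<Rightarrow> (nat \<Rightarrow> nat \<Rightarrow> nat) \<Rightarrow> nat \<Rightarrow> nat \<Rightarrow> (nat \<Rightarrow> nat)" where
  "growth K G 0 j = (\<lambda>_. 0)"
| "growth K G (Suc i) 0 = (\<lambda>_. 0)"
| "growth K G (Suc i) (Suc j) =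
     fwd_shape K (\<lambda>k. growth K G i (Suc j) k + growth K G (Suc i) j k) (growth K G i j) (G (Suc i) (Suc j))"

lemma growth_0_right [simp]: "growth K G i 0 = (\<lambda>_. 0)"
  by (cases i) auto

text \<open>The largest planar matching of the support of \<open>G\<close> inside \<open>{1..i} \<times> {1..j}\<close>.\<close>

fun lpm :: "(nat \<Rightarrow> nat \<Rightarrow> nat) \<Rightarrow> nat \<Rightarrow> nat \<Rightarrow> nat" where
  "lpm G 0 j = 0"
| "lpm G (Suc i) 0 = 0"
| "lpm G (Suc i) (Suc j) = max (max (lpm G i (Suc j)) (lpm G (Suc i) j))
      (lpm G i j + (if 0 < G (Suc i) (Suc j) then 1 else 0))"

lemma lpm_le: "lpm G i j \<le> i"
  by (induction G i j rule: lpm.induct) auto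

definition rect_sum :: "(nat \<Rightarrow> nat \<Rightarrow> nat) \<Rightarrow> nat \<Rightarrow> nat \<Rightarrow> nat" where
  "rect_sum G i j = (\<Sum>u\<in>{1..i}. \<Sum>v\<in>{1..j}. G u v)"

lemma rect_sum_0 [simp]: "rect_sum G 0 j = 0" "rect_sum G i 0 = 0"
  unfolding rect_sum_def by auto

lemma rect_sum_Suc_left: "rect_sum G (Suc i) j = rect_sum G i j + (\<Sum>v\<in>{1..j}. G (Suc i) v)"
  unfolding rect_sum_def by simp

lemma rect_sum_Suc_right: "rect_sum G i (Suc j) = rect_sum G i j + (\<Sum>u\<in>{1..i}. G u (Suc j))"
  unfolding rect_sum_def by (simp add: sum.distrib)

lemma rect_sum_step:
  "rect_sum G (Suc i) (Suc j) + rect_sum G i j =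
     rect_sum G i (Suc j) + rect_sum G (Suc i) j + G (Suc i) (Suc j)"
  unfolding rect_sum_def by (simp add: sum.distrib)

definition num_rows :: "(nat \<Rightarrow> nat) \<Rightarrow> nat \<Rightarrow> bool" where
  "num_rows p D \<longleftrightarrow> (\<forall>t. p t = 0 \<longleftrightarrow> D \<le> t)"

lemma num_rows_zero_iff: "num_rows p D \<Longrightarrow> p t = 0 \<longleftrightarrow> D \<le> t"
  unfolding num_rows_def by blast

definition part_size :: "nat \<Rightarrow> (nat \<Rightarrow> nat) \<Rightarrow> nat" where
  "part_size K p = (\<Sum>k<K. p k)"

lemma growth_cell:
  fixes x :: nat
  assumes K: "i + 1 < K" and D\<rho>: "num_rows \<rho> D\<rho>" and D\<mu>: "num_rows \<mu> D\<mu>" and D\<nu>: "num_rows \<nu> D\<nu>"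
    and "D\<rho> \<le> i" "D\<mu> \<le> i" "D\<nu> \<le> Suc i"
    and h1: "horizontal_strip \<rho> \<mu>" and h2: "horizontal_strip \<rho> \<nu>"
  defines "l \<equiv> fwd_shape K (\<lambda>k. \<mu> k + \<nu> k) \<rho> x"
  shows "num_rows l (max (max D\<mu> D\<nu>) (D\<rho> + (if 0 < x then 1 else 0)))"
    "horizontal_strip \<mu> l" "horizontal_strip \<nu> l"
    "part_size K l + part_size K \<rho> = part_size K \<mu> + part_size K \<nu> + x"
proof -
  let ?s = "\<lambda>k. \<mu> k + \<nu> k"
  have \<rho>s: "\<forall>k. \<rho> k \<le> ?s k" using horizontal_stripD(1)[OF h1] by (simp add: trans_le_add1)
  have sK: "\<forall>k\<ge>K. ?s k = 0" using assms(6,7) K by (simp add: num_rows_zero_iff[OF D\<mu>] num_rows_zero_iff[OF D\<nu>])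
  have \<rho>K: "\<forall>k. K - 1 \<le> k \<longrightarrow> \<rho> k = 0" using assms(5) K by (auto simp: num_rows_zero_iff[OF D\<rho>])
  note F = local_rule_forward[OF _ \<rho>s sK \<rho>K, of x, folded l_def]
  have R: "local_rule ?s \<rho> l (fwd_carry K ?s \<rho> x)" using F K by auto
  show "horizontal_strip \<mu> l" "horizontal_strip \<nu> l" using local_rule_forward_strips[OF R h1 h2] by auto
  have bound: "\<forall>k\<ge>K. \<mu> k = 0 \<and> \<nu> k = 0 \<and> l k = 0" using sK F(3) K by auto
  have cK: "fwd_carry K ?s \<rho> x K = x" using F K by auto
  have zero_iff: "l t = 0 \<longleftrightarrow> \<mu> t = 0 \<and> \<nu> t = 0 \<and> (0 < x \<longrightarrow> 0 < t \<and> \<rho> (t - 1) = 0)" for t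
  proof
    assume "l t = 0"
    then show "\<mu> t = 0 \<and> \<nu> t = 0 \<and> (0 < x \<longrightarrow> 0 < t \<and> \<rho> (t - 1) = 0)"
      using local_rule_shape_zeroD[OF R h1 h2 bound] cK by simp
  qed (use local_rule_shape_zeroI[OF R h1 h2 bound] cK in simp)
  have "D\<rho> \<le> D\<mu>"
    using D\<rho> D\<mu> horizontal_stripD(1)[OF h1, of D\<mu>] unfolding num_rows_def by (metis le_zero_eq order_refl)
  show "num_rows l (max (max D\<mu> D\<nu>) (D\<rho> + (if 0 < x then 1 else 0)))"
    unfolding num_rows_def
  proof
    fix t
    show "l t = 0 \<longleftrightarrow> max (max D\<mu> D\<nu>) (D\<rho> + (if 0 < x then 1 else 0)) \<le> t"
      using zero_iff[of t] \<open>D\<rho> \<le> D\<mu>\<close> D\<rho> D\<mu> D\<nu> unfolding num_rows_def by (cases t) auto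
  qed
  show "part_size K l + part_size K \<rho> = part_size K \<mu> + part_size K \<nu> + x"
    using local_rule_size[OF R, of K] cK unfolding part_size_def by (simp add: sum.distrib)
qed

lemma growth_invariants:
  assumes "i < K"
  shows "num_rows (growth K G i j) (lpm G i j) \<and> part_size K (growth K G i j) = rect_sum G i j \<and>
    horizontal_strip (growth K G i j) (growth K G i (Suc j)) \<and>
    (0 < i \<longrightarrow> horizontal_strip (growth K G (i - 1) j) (growth K G i j))"
  using assms
proof (induction i arbitrary: j)
  case 0
  then show ?case unfolding num_rows_def horizontal_strip_def part_size_def by simp
next
  case (Suc i)
  have IH: "num_rows (growth K G i j) (lpm G i j) \<and> part_size K (growth K G i j) = rect_sum G i j \<and>
      horizontal_strip (growth K G i j) (growth K G i (Suc j))" for j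
    using Suc by auto
  have row: "num_rows (growth K G (Suc i) j) (lpm G (Suc i) j) \<and>
      part_size K (growth K G (Suc i) j) = rect_sum G (Suc i) j \<and>
      horizontal_strip (growth K G i j) (growth K G (Suc i) j) \<and>
      (\<forall>j'<j. horizontal_strip (growth K G (Suc i) j') (growth K G (Suc i) (Suc j')))" for j
  proof (induction j)
    case 0
    then show ?case unfolding num_rows_def part_size_def horizontal_strip_def by simp
  next
    case (Suc j)
    have "i + 1 < K" using \<open>Suc i < K\<close> by simp
    note cell = growth_cell[OF this conjunct1[OF IH[of j]] conjunct1[OF IH[of "Suc j"]]
        conjunct1[OF Suc.IH] lpm_le lpm_le lpm_le conjunct2[OF conjunct2[OF IH[of j]]]
        conjunct1[OF conjunct2[OF conjunct2[OF Suc.IH]]], of "G (Suc i) (Suc j)", folded growth.simps(3)]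
    show ?case
      using cell IH[of j] IH[of "Suc j"] Suc.IH rect_sum_step[of G i j] less_Suc_eq by auto
  qed
  show ?case using row[of j] row[of "Suc j"] by auto
qed

lemma
  assumes "i < K"
  shows growth_num_rows: "num_rows (growth K G i j) (lpm G i j)"
    and growth_size: "part_size K (growth K G i j) = rect_sum G i j"
    and growth_strip_right: "horizontal_strip (growth K G i j) (growth K G i (Suc j))"
  using growth_invariants[OF assms] by auto

lemma growth_strip_up:
  "Suc i < K \<Longrightarrow> horizontal_strip (growth K G i j) (growth K G (Suc i) j)"
  using growth_invariants[of "Suc i" K G j] by simp

definition planar_matching_in :: "(nat \<Rightarrow> nat \<Rightarrow> nat) \<Rightarrow> nat \<Rightarrow> nat \<Rightarrow> (nat \<times> nat) set \<Rightarrow> bool" where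
  "planar_matching_in G i j M \<longleftrightarrow> planar_matching G M \<and> M \<subseteq> {1..i} \<times> {1..j}"

lemma planar_matching_in_finite: "planar_matching_in G i j M \<Longrightarrow> finite M"
  unfolding planar_matching_in_def by (meson finite_SigmaI finite_atLeastAtMost finite_subset)

lemma planar_matching_in_mono:
  "planar_matching_in G i j M \<Longrightarrow> i \<le> i' \<Longrightarrow> j \<le> j' \<Longrightarrow> planar_matching_in G i' j' M"
  unfolding planar_matching_in_def by auto

lemma planar_matching_noncrossing:
  "planar_matching G M \<Longrightarrow> e \<in> M \<Longrightarrow> e' \<in> M \<Longrightarrow> e \<noteq> e' \<Longrightarrow> noncrossing e e'"
  unfolding planar_matching_def by blast

lemma planar_matching_subset: "planar_matching G M \<Longrightarrow> M' \<subseteq> M \<Longrightarrow> planar_matching G M'"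
  unfolding planar_matching_def by blast

lemma planar_matching_pos: "planar_matching G M \<Longrightarrow> (u, v) \<in> M \<Longrightarrow> 0 < G u v"
  unfolding planar_matching_def by blast

lemma planar_matching_corner:
  assumes M: "planar_matching_in G (Suc i) (Suc j) M"
    and e1: "e1 \<in> M" "fst e1 = Suc i" and e2: "e2 \<in> M" "snd e2 = Suc j"
  shows "(Suc i, Suc j) \<in> M" "planar_matching_in G i j (M - {(Suc i, Suc j)})"
proof -
  have sub: "M \<subseteq> {1..Suc i} \<times> {1..Suc j}" and pm: "planar_matching G M"
    using M unfolding planar_matching_in_def by auto
  have "e1 = e2"
  proof (rule ccontr)
    assume "e1 \<noteq> e2"
    then have "noncrossing e1 e2" using planar_matching_noncrossing[OF pm e1(1) e2(1)] by simp
    moreover have "snd e1 \<le> Suc j" "fst e2 \<le> Suc i" using e1(1) e2(1) sub by auto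
    ultimately show False using e1(2) e2(2) unfolding noncrossing_def by linarith
  qed
  then show corner: "(Suc i, Suc j) \<in> M" using e1 e2 by (metis prod.collapse)
  have "M - {(Suc i, Suc j)} \<subseteq> {1..i} \<times> {1..j}"
  proof
    fix e assume eM: "e \<in> M - {(Suc i, Suc j)}"
    then have "noncrossing e (Suc i, Suc j)" using planar_matching_noncrossing[OF pm _ corner] by simp
    moreover have "e \<in> {1..Suc i} \<times> {1..Suc j}" using eM sub by blast
    ultimately show "e \<in> {1..i} \<times> {1..j}" unfolding noncrossing_def by (cases e) auto
  qed
  then show "planar_matching_in G i j (M - {(Suc i, Suc j)})"
    using planar_matching_subset[OF pm] unfolding planar_matching_in_def by simp
qed

lemma card_planar_matching_le_lpm: "planar_matching_in G i j M \<Longrightarrow> card M \<le> lpm G i j"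
proof (induction G i j arbitrary: M rule: lpm.induct)
  case (1 G j) then show ?case unfolding planar_matching_in_def by auto
next
  case (2 G i) then show ?case unfolding planar_matching_in_def by auto
next
  case (3 G i j)
  have sub: "M \<subseteq> {1..Suc i} \<times> {1..Suc j}" and pm: "planar_matching G M"
    using "3.prems" unfolding planar_matching_in_def by auto
  consider "\<forall>e\<in>M. fst e \<le> i" | "\<forall>e\<in>M. snd e \<le> j"
    | e1 e2 where "e1 \<in> M" "fst e1 = Suc i" "e2 \<in> M" "snd e2 = Suc j"
  proof -
    have "fst e \<le> Suc i" "snd e \<le> Suc j" if "e \<in> M" for e using sub that by auto
    then show ?thesis using that by (blast elim: le_SucE)
  qed
  then show ?case
  proof cases
    case 1
    then have "planar_matching_in G i (Suc j) M"
      using sub pm unfolding planar_matching_in_def by (force simp: mem_Times_iff)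
    then show ?thesis using "3.IH"(1) by fastforce
  next
    case 2
    then have "planar_matching_in G (Suc i) j M"
      using sub pm unfolding planar_matching_in_def by (force simp: mem_Times_iff)
    then show ?thesis using "3.IH"(2) by fastforce
  next
    case 3
    note corner = planar_matching_corner[OF "3.prems" 3]
    have "card M = card (M - {(Suc i, Suc j)}) + 1"
      using card_Suc_Diff1[OF planar_matching_in_finite[OF "3.prems"] corner(1)] by simp
    moreover have "0 < G (Suc i) (Suc j)" using planar_matching_pos[OF pm corner(1)] .
    ultimately show ?thesis using "3.IH"(3)[OF corner(2)] by simp
  qed
qed

lemma lpm_attained: "\<exists>M. planar_matching_in G i j M \<and> card M = lpm G i j"
proof (induction G i j rule: lpm.induct)
  case (1 G j)
  then show ?case by (intro exI[of _ "{}"]) (auto simp: planar_matching_in_def planar_matching_def)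
next
  case (2 G i)
  then show ?case by (intro exI[of _ "{}"]) (auto simp: planar_matching_in_def planar_matching_def)
next
  case (3 G i j)
  obtain M1 where M1: "planar_matching_in G i (Suc j) M1" "card M1 = lpm G i (Suc j)"
    using "3.IH"(1) by blast
  obtain M2 where M2: "planar_matching_in G (Suc i) j M2" "card M2 = lpm G (Suc i) j"
    using "3.IH"(2) by blast
  obtain M3 where M3: "planar_matching_in G i j M3" "card M3 = lpm G i j"
    using "3.IH"(3) by blast
  have M123: "planar_matching_in G (Suc i) (Suc j) M1" "planar_matching_in G (Suc i) (Suc j) M2"
    "planar_matching_in G (Suc i) (Suc j) M3"
    using planar_matching_in_mono[OF M1(1)] planar_matching_in_mono[OF M2(1)]
      planar_matching_in_mono[OF M3(1)] by simp_all
  show ?case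
  proof (cases "0 < G (Suc i) (Suc j)")
    case False
    then show ?thesis using M1 M2 M3 M123 by (cases "lpm G i (Suc j) \<le> lpm G (Suc i) j") (auto simp: max_def)
  next
    case True
    let ?M = "insert (Suc i, Suc j) M3"
    have "(Suc i, Suc j) \<notin> M3" using M3 unfolding planar_matching_in_def by auto
    then have "card ?M = lpm G i j + 1" using planar_matching_in_finite[OF M3(1)] M3(2) by simp
    moreover have "planar_matching_in G (Suc i) (Suc j) ?M"
      using M3 True unfolding planar_matching_in_def planar_matching_def noncrossing_def by auto
    ultimately show ?thesis
      using M1 M2 M123 True by (cases "lpm G i (Suc j) \<le> lpm G (Suc i) j") (auto simp: max_def)
  qed
qed

lemma L_eq_lpm:
  assumes "regular_multigraph n r G"
  shows "L G = lpm G n n"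
proof -
  have "planar_matching G M \<longleftrightarrow> planar_matching_in G n n M" for M
  proof -
    have "M \<subseteq> {1..n} \<times> {1..n}" if "planar_matching G M"
      using assms planar_matching_pos[OF that] unfolding regular_multigraph_def
      by (metis SigmaI less_irrefl prod.collapse subsetI)
    then show ?thesis unfolding planar_matching_in_def by blast
  qed
  then have eq: "{card M | M. planar_matching G M} = {card M | M. planar_matching_in G n n M}"
    by simp
  obtain M0 where M0: "planar_matching_in G n n M0" "card M0 = lpm G n n"
    using lpm_attained by blast
  show ?thesis unfolding L_def eq
  proof (rule Max_eqI)
    show "finite {card M | M. planar_matching_in G n n M}"
      by (rule finite_subset[of _ "{0..lpm G n n}"]) (auto dest: card_planar_matching_le_lpm)
    show "y \<le> lpm G n n" if "y \<in> {card M | M. planar_matching_in G n n M}" for y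
      using that card_planar_matching_le_lpm by blast
    show "lpm G n n \<in> {card M | M. planar_matching_in G n n M}"
      using M0 by (metis (mono_tags, lifting) mem_Collect_eq)
  qed
qed

definition strip_chain :: "nat \<Rightarrow> nat \<Rightarrow> (nat \<Rightarrow> nat \<Rightarrow> nat) \<Rightarrow> bool" where
  "strip_chain n d P \<longleftrightarrow>
     P 0 = (\<lambda>_. 0) \<and> (\<forall>j<n. horizontal_strip (P j) (P (Suc j))) \<and> (\<forall>k\<ge>d. P n k = 0)"

lemma strip_chain_mono:
  assumes P: "strip_chain n d P" and j: "j \<le> n"
  shows "P j k \<le> P n k"
  using j
proof (induction j rule: inc_induct)
  case base then show ?case by simp
next
  case (step j)
  then show ?case using P horizontal_stripD(1)[of "P j" "P (Suc j)" k] unfolding strip_chain_def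
    by (meson le_trans)
qed

text \<open>\<open>back_growth n P Q a b\<close> is the partition at \<open>(n - a, n - b)\<close> of the diagram whose top
  boundary is the chain \<open>P\<close> and whose right boundary is the chain \<open>Q\<close>.\<close>

fun back_growth :: "nat \<Rightarrow> (nat \<Rightarrow> nat \<Rightarrow> nat) \<Rightarrow> (nat \<Rightarrow> nat \<Rightarrow> nat) \<Rightarrow> nat \<Rightarrow> nat \<Rightarrow> nat \<Rightarrow> nat" where
  "back_growth n P Q 0 b = P (n - b)"
| "back_growth n P Q (Suc a) 0 = Q (n - Suc a)"
| "back_growth n P Q (Suc a) (Suc b) =
     back_shape (\<lambda>k. back_growth n P Q (Suc a) b k + back_growth n P Q a (Suc b) k) (back_growth n P Q a b)"

lemma back_growth_cell:
  assumes "horizontal_strip (back_growth n P Q (Suc a) b) (back_growth n P Q a b)"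
    and "horizontal_strip (back_growth n P Q a (Suc b)) (back_growth n P Q a b)"
  shows "horizontal_strip (back_growth n P Q (Suc a) (Suc b)) (back_growth n P Q (Suc a) b)"
    "horizontal_strip (back_growth n P Q (Suc a) (Suc b)) (back_growth n P Q a (Suc b))"
  using local_rule_backward_strips[OF local_rule_back assms] by simp_all

context
  fixes n d :: nat and P Q :: "nat \<Rightarrow> nat \<Rightarrow> nat"
  assumes P: "strip_chain n d P" and Q: "strip_chain n d Q" and PQ: "P n = Q n"
begin

lemma back_growth_strips:
  "horizontal_strip (back_growth n P Q (Suc a) b) (back_growth n P Q a b) \<and>
   horizontal_strip (back_growth n P Q a (Suc b)) (back_growth n P Q a b)"
proof -
  have chain_strip: "horizontal_strip (R (n - Suc b)) (R (n - b))" if R: "strip_chain n d R" for R b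
  proof (cases "b < n")
    case True
    then have "n - b = Suc (n - Suc b)" "n - Suc b < n" by simp_all
    then show ?thesis using R unfolding strip_chain_def by metis
  next
    case False then show ?thesis using R horizontal_strip_zero unfolding strip_chain_def by simp
  qed
  have left: "\<forall>b. horizontal_strip (back_growth n P Q a (Suc b)) (back_growth n P Q a b)" for a
  proof (induction a)
    case 0 then show ?case using chain_strip[OF P] by simp
  next
    case (Suc a)
    note IH_a = Suc.IH
    have "horizontal_strip (back_growth n P Q (Suc a) b) (back_growth n P Q a b) \<and>
      (\<forall>b'<b. horizontal_strip (back_growth n P Q (Suc a) (Suc b')) (back_growth n P Q (Suc a) b'))" for b
    proof (induction b)
      case 0 show ?case using chain_strip[OF Q, of a] PQ by (cases a) auto
    next
      case (Suc b)
      show ?case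
        using back_growth_cell[OF conjunct1[OF Suc.IH] spec[OF IH_a, of b]] Suc.IH less_Suc_eq
        by auto
    qed
    then show ?case by blast
  qed
  have down: "horizontal_strip (back_growth n P Q (Suc a) b) (back_growth n P Q a b)" for a b
  proof (induction b)
    case 0 show ?case using chain_strip[OF Q, of a] PQ by (cases a) auto
  next
    case (Suc b) show ?case using back_growth_cell(2)[OF Suc.IH spec[OF left[of a], of b]] .
  qed
  show ?thesis using down left by blast
qed

lemma back_growth_le: "back_growth n P Q a b k \<le> P n k"
proof (induction a arbitrary: b)
  case 0 then show ?case using strip_chain_mono[OF P, of "n - b"] by simp
next
  case (Suc a)
  show ?case
  proof (induction b)
    case 0 then show ?case using strip_chain_mono[OF Q, of "n - Suc a"] PQ by simp
  next
    case (Suc b)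
    then show ?case
      using horizontal_stripD(1)[OF conjunct2[OF back_growth_strips[of "Suc a" b]], of k] by simp
  qed
qed

lemma back_growth_zero: "d \<le> k \<Longrightarrow> back_growth n P Q a b k = 0"
  using back_growth_le[of a b k] P unfolding strip_chain_def by simp

lemma back_growth_boundary:
  assumes "1 \<le> n"
  shows "back_growth n P Q n b = (\<lambda>_. 0)" "back_growth n P Q a n = (\<lambda>_. 0)"
proof -
  show "back_growth n P Q n b = (\<lambda>_. 0)"
  proof (induction b)
    case 0 then show ?case using Q assms unfolding strip_chain_def by (cases n) auto
  next
    case (Suc b)
    then show ?case
      using horizontal_stripD(1)[OF conjunct2[OF back_growth_strips[of n b]]] assms
      by (simp add: fun_eq_iff)
  qed
  show "back_growth n P Q a n = (\<lambda>_. 0)"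
  proof (induction a)
    case 0 then show ?case using P unfolding strip_chain_def by simp
  next
    case (Suc a)
    then show ?case
      using horizontal_stripD(1)[OF conjunct1[OF back_growth_strips[of a n]]]
      by (simp add: fun_eq_iff)
  qed
qed

lemma fwd_shape_back_growth:
  fixes a b :: nat
  assumes dK: "d < K"
  defines "s \<equiv> \<lambda>k. back_growth n P Q (Suc a) b k + back_growth n P Q a (Suc b) k"
  shows "fwd_shape K s (back_growth n P Q (Suc a) (Suc b)) (back_carry s (back_growth n P Q a b) K) =
    back_growth n P Q a b"
proof -
  let ?\<rho> = "back_growth n P Q (Suc a) (Suc b)" and ?x = "back_carry s (back_growth n P Q a b) K"
  have R: "local_rule s ?\<rho> (back_growth n P Q a b) (back_carry s (back_growth n P Q a b))"
    using local_rule_back unfolding s_def by simp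
  have \<rho>s: "\<forall>k. ?\<rho> k \<le> s k"
    using horizontal_stripD(1)[OF conjunct2[OF back_growth_strips[of "Suc a" b]]]
    unfolding s_def by (simp add: trans_le_add1)
  have sK: "\<forall>k\<ge>K. s k = 0" using back_growth_zero dK unfolding s_def by auto
  have \<rho>K: "\<forall>k. K - 1 \<le> k \<longrightarrow> ?\<rho> k = 0"
    using back_growth_zero[of _ "Suc a" "Suc b"] dK by (auto simp del: back_growth.simps)
  note F = local_rule_forward[OF _ \<rho>s sK \<rho>K, of ?x]
  have "\<forall>k\<ge>K. fwd_shape K s ?\<rho> ?x k = 0 \<and> back_growth n P Q a b k = 0 \<and> ?\<rho> k = 0 \<and> s k = 0"
    using F dK back_growth_zero sK \<rho>K by auto
  then show ?thesis using local_rule_unique_forward[OF _ R] F dK by auto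
qed

end

text \<open>The entry that the backward rule leaves in a cell is the carry out of the top row \<open>K\<close>.\<close>

definition back_matrix :: "nat \<Rightarrow> (nat \<Rightarrow> nat \<Rightarrow> nat) \<Rightarrow> (nat \<Rightarrow> nat \<Rightarrow> nat) \<Rightarrow> nat \<Rightarrow> nat \<Rightarrow> nat \<Rightarrow> nat" where
  "back_matrix n P Q K u v = (if u \<in> {1..n} \<and> v \<in> {1..n} then
     back_carry (\<lambda>k. back_growth n P Q (Suc (n - u)) (n - v) k + back_growth n P Q (n - u) (Suc (n - v)) k)
       (back_growth n P Q (n - u) (n - v)) K
     else 0)"

lemma growth_back_matrix:
  assumes P: "strip_chain n d P" and Q: "strip_chain n d Q" and PQ: "P n = Q n"
    and n: "1 \<le> n" and dK: "d < K"
  shows "i \<le> n \<Longrightarrow> j \<le> n \<Longrightarrow> growth K (back_matrix n P Q K) i j = back_growth n P Q (n - i) (n - j)"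
proof (induction i arbitrary: j)
  case 0 then show ?case using back_growth_boundary[OF P Q PQ n] by simp
next
  case (Suc i)
  note IH_i = Suc.IH
  show ?case using \<open>j \<le> n\<close>
  proof (induction j)
    case 0 then show ?case using back_growth_boundary[OF P Q PQ n] by simp
  next
    case (Suc j)
    obtain a b where ab: "n - i = Suc a" "n - j = Suc b" "n - Suc i = a" "n - Suc j = b"
      using \<open>Suc i \<le> n\<close> \<open>Suc j \<le> n\<close> by (metis Suc_diff_Suc Suc_le_lessD)
    then show ?case
      using IH_i[of j] IH_i[of "Suc j"] Suc.IH Suc.prems \<open>Suc i \<le> n\<close>
        fwd_shape_back_growth[OF P Q PQ dK, of a b]
      by (simp add: back_matrix_def)
  qed
qed

lemma growth_local_rule:
  fixes G :: "nat \<Rightarrow> nat \<Rightarrow> nat" and j :: nat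
  assumes K: "Suc i < K"
  defines "s \<equiv> \<lambda>k. growth K G i (Suc j) k + growth K G (Suc i) j k"
  shows "local_rule s (growth K G i j) (growth K G (Suc i) (Suc j))
      (fwd_carry K s (growth K G i j) (G (Suc i) (Suc j)))"
    "fwd_carry K s (growth K G i j) (G (Suc i) (Suc j)) K = G (Suc i) (Suc j)"
proof -
  have i: "i < K" using K by simp
  have \<rho>s: "\<forall>k. growth K G i j k \<le> s k"
    using horizontal_stripD(1)[OF growth_strip_right[OF i]] unfolding s_def by (simp add: trans_le_add1)
  have sK: "\<forall>k\<ge>K. s k = 0"
    using growth_num_rows[OF i, of G "Suc j"] growth_num_rows[OF K, of G j]
      lpm_le[of G i "Suc j"] lpm_le[of G "Suc i" j] K
    unfolding s_def by (auto simp: num_rows_zero_iff)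
  have \<rho>K: "\<forall>k. K - 1 \<le> k \<longrightarrow> growth K G i j k = 0"
    using growth_num_rows[OF i, of G j] lpm_le[of G i j] K by (auto simp: num_rows_zero_iff)
  note F = local_rule_forward[OF _ \<rho>s sK \<rho>K, of "G (Suc i) (Suc j)"]
  show "local_rule s (growth K G i j) (growth K G (Suc i) (Suc j))
      (fwd_carry K s (growth K G i j) (G (Suc i) (Suc j)))"
    "fwd_carry K s (growth K G i j) (G (Suc i) (Suc j)) K = G (Suc i) (Suc j)"
    using F K unfolding s_def by simp_all
qed

lemma growth_cell_determined:
  assumes K: "Suc i < K"
    and eq: "growth K G i (Suc j) = growth K G' i (Suc j)" "growth K G (Suc i) j = growth K G' (Suc i) j"
      "growth K G (Suc i) (Suc j) = growth K G' (Suc i) (Suc j)"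
  shows "growth K G i j = growth K G' i j \<and> G (Suc i) (Suc j) = G' (Suc i) (Suc j)"
proof -
  let ?s = "\<lambda>k. growth K G i (Suc j) k + growth K G (Suc i) j k"
  note R = growth_local_rule[OF K, of G j] and R' = growth_local_rule[OF K, of G' j]
  have "local_rule ?s (growth K G' i j) (growth K G (Suc i) (Suc j))
      (fwd_carry K ?s (growth K G' i j) (G' (Suc i) (Suc j)))"
    using R'(1) unfolding eq[symmetric] .
  note unique = local_rule_unique_back[OF R(1) this]
  have "G (Suc i) (Suc j) = fwd_carry K ?s (growth K G i j) (G (Suc i) (Suc j)) K"
    using R(2) by simp
  also have "\<dots> = fwd_carry K ?s (growth K G' i j) (G' (Suc i) (Suc j)) K"
    using conjunct2[OF unique] by simp
  also have "\<dots> = G' (Suc i) (Suc j)"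
    using R'(2) unfolding eq(1,2)[symmetric] .
  finally show ?thesis using conjunct1[OF unique] by simp
qed

lemma growth_determined_by_boundary:
  assumes nK: "n < K"
    and top: "\<And>j. j \<le> n \<Longrightarrow> growth K G n j = growth K G' n j"
    and right: "\<And>i. i \<le> n \<Longrightarrow> growth K G i n = growth K G' i n"
    and "i < n" "j < n"
  shows "G (Suc i) (Suc j) = G' (Suc i) (Suc j)"
proof -
  have eq: "growth K G i j = growth K G' i j" if "i \<le> n" "j \<le> n" for i j
    using that
  proof (induction i arbitrary: j rule: inc_induct)
    case base then show ?case using top by simp
  next
    case (step i)
    note IH_i = step.IH
    show ?case using \<open>j \<le> n\<close>
    proof (induction j rule: inc_induct)
      case base then show ?case using right \<open>i < n\<close> by simp
    next
      case (step j)
      then show ?case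
        using growth_cell_determined[of i K G j G'] IH_i[of j] IH_i[of "Suc j"] nK \<open>i < n\<close>
        by (simp del: growth.simps)
    qed
  qed
  show ?thesis
    using growth_cell_determined[of i K G j G'] eq[of i "Suc j"] eq[of "Suc i" j] eq[of "Suc i" "Suc j"]
      assms(4,5) nK
    by (simp del: growth.simps)
qed

section \<open>Lattice words\<close>

lemma count_list_replicate: "count_list (replicate m x) c = (if x = c then m else 0)"
  by (induction m) auto

lemma count_list_take_le: "count_list (take t xs) x \<le> count_list xs x"
proof -
  have "count_list xs x = count_list (take t xs) x + count_list (drop t xs) x"
    by (metis append_take_drop_id count_list_append)
  then show ?thesis by simp
qed

lemma sum_count_list_letters: "set xs \<subseteq> {1..d} \<Longrightarrow> (\<Sum>k<d. count_list xs (Suc k)) = length xs"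
  using sum_count_set[of xs "{1..d}"] by (simp add: sum.atLeast1_atMost_eq)

lemma dropWhile_sorted_ge_less:
  assumes "sorted_wrt (\<ge>) xs" "x \<in> set (dropWhile (\<lambda>x. a \<le> x) xs)"
  shows "x < (a::nat)"
  using assms
proof (induction xs)
  case Nil then show ?case by simp
next
  case (Cons y ys)
  then show ?case by (cases "a \<le> y") auto
qed

lemma take_block_split: "t \<le> r \<Longrightarrow> take (r * j + t) w = take (r * j) w @ take t (take r (drop (r * j) w))"
  by (simp add: take_add min_def)

lemma length_concat_blocks: "\<forall>b\<in>set bl. length b = r \<Longrightarrow> length (concat bl) = r * length bl"
  by (induction bl) auto

lemma take_concat_blocks:
  assumes "\<forall>b\<in>set bl. length b = r" "j < length bl" "t \<le> r"
  shows "take (r * j + t) (concat bl) = concat (take j bl) @ take t (bl ! j)"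
  using assms
proof (induction bl arbitrary: j)
  case Nil then show ?case by simp
next
  case (Cons b bl)
  show ?case
  proof (cases j)
    case 0 then show ?thesis using Cons.prems by simp
  next
    case (Suc j0)
    have "take (r * j + t) (concat (b # bl)) = b @ take (r * j0 + t) (concat bl)"
      using Cons.prems Suc by (simp add: take_append)
    also have "\<dots> = b @ concat (take j0 bl) @ take t (bl ! j0)"
      using Cons.IH[of j0] Cons.prems Suc by simp
    finally show ?thesis using Suc by simp
  qed
qed

lemma nth_concat_blocks:
  assumes "\<forall>b\<in>set bl. length b = r" "j < length bl" "t < r"
  shows "concat bl ! (r * j + t) = bl ! j ! t"
proof -
  have "\<forall>b\<in>set (take j bl). length b = r" using assms(1) by (meson in_set_takeD)
  then have "length (concat (take j bl)) = r * j"
    using length_concat_blocks[of "take j bl" r] assms(2) by simp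
  moreover have "length (bl ! j) = r" using assms(1,2) by simp
  moreover have "take (r * j + Suc t) (concat bl) = concat (take j bl) @ take (Suc t) (bl ! j)"
    using take_concat_blocks[OF assms(1,2), of "Suc t"] assms(3) by simp
  ultimately have "take (r * j + Suc t) (concat bl) ! (r * j + t) = bl ! j ! t"
    using assms(3) by (simp add: nth_append)
  then show ?thesis by simp
qed

text \<open>The letters \<open>k + 1\<close> of \<open>strip_word d p q\<close> mark the boxes that \<open>q/p\<close> has in row \<open>k\<close>,
  in decreasing order.\<close>

definition strip_word :: "nat \<Rightarrow> (nat \<Rightarrow> nat) \<Rightarrow> (nat \<Rightarrow> nat) \<Rightarrow> nat list" where
  "strip_word d p q = concat (map (\<lambda>k. replicate (q k - p k) (Suc k)) (rev [0..<d]))"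

definition chain_word :: "nat \<Rightarrow> nat \<Rightarrow> (nat \<Rightarrow> nat \<Rightarrow> nat) \<Rightarrow> nat list" where
  "chain_word n d P = concat (map (\<lambda>j. strip_word d (P j) (P (Suc j))) [0..<n])"

lemma strip_word_Suc: "strip_word (Suc d) p q = replicate (q d - p d) (Suc d) @ strip_word d p q"
  unfolding strip_word_def by simp

lemma count_strip_word:
  "count_list (strip_word d p q) c = (if 1 \<le> c \<and> c \<le> d then q (c - 1) - p (c - 1) else 0)"
proof (induction d)
  case 0 then show ?case unfolding strip_word_def by simp
next
  case (Suc d)
  then show ?case by (cases "c = Suc d") (auto simp: strip_word_Suc count_list_replicate)
qed

lemma set_strip_word: "set (strip_word d p q) \<subseteq> {1..d}"
  unfolding strip_word_def by auto

lemma sorted_strip_word: "sorted_wrt (\<ge>) (strip_word d p q)"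
proof (induction d)
  case 0 then show ?case unfolding strip_word_def by simp
next
  case (Suc d)
  have "\<forall>x\<in>set (strip_word d p q). x \<le> Suc d" using set_strip_word[of d p q] by auto
  moreover have "sorted_wrt (\<ge>) (replicate m (Suc d))" for m by (induction m) auto
  ultimately show ?case using Suc by (auto simp: strip_word_Suc sorted_wrt_append)
qed

lemma length_strip_word: "length (strip_word d p q) = (\<Sum>k<d. q k - p k)"
proof (induction d)
  case 0 then show ?case unfolding strip_word_def by simp
next
  case (Suc d) then show ?case by (simp add: strip_word_Suc)
qed

lemma set_chain_word: "set (chain_word n d P) \<subseteq> {1..d}"
  unfolding chain_word_def using set_strip_word by fastforce

definition regular_chain :: "nat \<Rightarrow> nat \<Rightarrow> nat \<Rightarrow> nat \<Rightarrow> (nat \<Rightarrow> nat \<Rightarrow> nat) \<Rightarrow> bool" where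
  "regular_chain n r d K P \<longleftrightarrow> strip_chain n d P \<and> (\<forall>j\<le>n. \<forall>k\<ge>d. P j k = 0) \<and>
     (\<forall>j\<le>n. part_size K (P j) = r * j) \<and> d \<le> K"

definition lattice_word :: "nat \<Rightarrow> nat list \<Rightarrow> bool" where
  "lattice_word d w \<longleftrightarrow>
     (\<forall>k c. 1 \<le> c \<and> c < d \<longrightarrow> count_list (take k w) (Suc c) \<le> count_list (take k w) c)"

definition blocks_decreasing :: "nat \<Rightarrow> nat \<Rightarrow> nat list \<Rightarrow> bool" where
  "blocks_decreasing n r w \<longleftrightarrow>
     (\<forall>i\<in>{1..n}. \<forall>s. 1 \<le> s \<and> s < r \<longrightarrow> w ! (r * (i - 1) + s - 1) \<ge> w ! (r * (i - 1) + s))"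

definition block_lattice_word :: "nat \<Rightarrow> nat \<Rightarrow> nat \<Rightarrow> nat list \<Rightarrow> bool" where
  "block_lattice_word n r d w \<longleftrightarrow>
     length w = r * n \<and> set w \<subseteq> {1..d} \<and> blocks_decreasing n r w \<and> lattice_word d w"

lemma part_size_eq_sum: "d \<le> K \<Longrightarrow> \<forall>k\<ge>d. p k = 0 \<Longrightarrow> part_size K p = (\<Sum>k<d. p k)"
  unfolding part_size_def by (rule sum.mono_neutral_right) auto

lemma regular_chain_strip:
  "regular_chain n r d K P \<Longrightarrow> j < n \<Longrightarrow> horizontal_strip (P j) (P (Suc j))"
  unfolding regular_chain_def strip_chain_def by blast

lemma regular_chain_decreasing:
  assumes "regular_chain n r d K P" "j \<le> n"
  shows "P j (Suc k) \<le> P j k"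
proof (cases j)
  case 0 then show ?thesis using assms unfolding regular_chain_def strip_chain_def by simp
next
  case (Suc j0)
  then have "horizontal_strip (P j0) (P j)" using regular_chain_strip[OF assms(1), of j0] assms(2) by simp
  then show ?thesis using horizontal_stripD[of "P j0" "P j" k] by simp
qed

lemma length_strip_word_chain:
  assumes W: "regular_chain n r d K P" and j: "j < n"
  shows "length (strip_word d (P j) (P (Suc j))) = r"
proof -
  have zero: "\<forall>k\<ge>d. P j k = 0" "\<forall>k\<ge>d. P (Suc j) k = 0" "d \<le> K"
    and size: "part_size K (P j) = r * j" "part_size K (P (Suc j)) = r * Suc j"
    using W j unfolding regular_chain_def by auto
  have "length (strip_word d (P j) (P (Suc j))) = (\<Sum>k<d. P (Suc j) k) - (\<Sum>k<d. P j k)"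
    unfolding length_strip_word
    by (rule sum_subtractf_nat) (use horizontal_stripD(1)[OF regular_chain_strip[OF W j]] in auto)
  also have "\<dots> = r" using size part_size_eq_sum[OF zero(3) zero(1)] part_size_eq_sum[OF zero(3) zero(2)] by simp
  finally show ?thesis .
qed

context
  fixes n r d K P
  assumes W: "regular_chain n r d K P"
begin

lemma length_chain_word_blocks:
  "\<forall>b\<in>set (map (\<lambda>j. strip_word d (P j) (P (Suc j))) [0..<n]). length b = r"
  using length_strip_word_chain[OF W] by auto

lemma length_chain_word: "length (chain_word n d P) = r * n"
  unfolding chain_word_def using length_concat_blocks[OF length_chain_word_blocks] by simp

lemma nth_chain_word:
  "j < n \<Longrightarrow> t < r \<Longrightarrow> chain_word n d P ! (r * j + t) = strip_word d (P j) (P (Suc j)) ! t"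
  unfolding chain_word_def using nth_concat_blocks[OF length_chain_word_blocks, of j t] by simp

lemma take_chain_word:
  assumes "j < n" "t \<le> r"
  shows "take (r * j + t) (chain_word n d P) = take (r * j) (chain_word n d P) @ take t (strip_word d (P j) (P (Suc j)))"
  using take_concat_blocks[OF length_chain_word_blocks, of j t] take_concat_blocks[OF length_chain_word_blocks, of j 0]
    assms unfolding chain_word_def by simp

lemma count_take_chain_word:
  "j \<le> n \<Longrightarrow> count_list (take (r * j) (chain_word n d P)) c = (if 1 \<le> c \<and> c \<le> d then P j (c - 1) else 0)"
proof (induction j)
  case 0 then show ?case using W unfolding regular_chain_def strip_chain_def by simp
next
  case (Suc j)
  then have "j < n" by simp
  then have "count_list (take (r * Suc j) (chain_word n d P)) c =
      count_list (take (r * j) (chain_word n d P)) c + count_list (strip_word d (P j) (P (Suc j))) c"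
    using take_chain_word[of j r] length_strip_word_chain[OF W] by (simp add: add.commute)
  also have "\<dots> = (if 1 \<le> c \<and> c \<le> d then P (Suc j) (c - 1) else 0)"
    using Suc \<open>j < n\<close> count_strip_word[of d "P j" "P (Suc j)" c]
      horizontal_stripD(1)[OF regular_chain_strip[OF W \<open>j < n\<close>], of "c - 1"]
    by simp
  finally show ?case .
qed

lemma count_chain_word: "count_list (chain_word n d P) c = (if 1 \<le> c \<and> c \<le> d then P n (c - 1) else 0)"
  using count_take_chain_word[OF order_refl, of c] length_chain_word by simp

lemma chain_word_blocks_decreasing: "blocks_decreasing n r (chain_word n d P)"
  unfolding blocks_decreasing_def
proof (intro ballI allI impI)
  fix i s assume i: "i \<in> {1..n}" and s: "1 \<le> s \<and> s < r"
  let ?b = "strip_word d (P (i - 1)) (P (Suc (i - 1)))"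
  have j: "i - 1 < n" using i by auto
  have "?b ! s \<le> ?b ! (s - 1)"
    using sorted_wrt_nth_less[OF sorted_strip_word, of "s - 1" s] length_strip_word_chain[OF W j] s by simp
  moreover have "r * (i - 1) + s - 1 = r * (i - 1) + (s - 1)" "s - 1 < r" using s by auto
  ultimately show "chain_word n d P ! (r * (i - 1) + s) \<le> chain_word n d P ! (r * (i - 1) + s - 1)"
    using nth_chain_word[OF j, of s] nth_chain_word[OF j, of "s - 1"] s by simp
qed

text \<open>Every prefix of the word consists of the chain up to some \<open>P j\<close> followed by part of the
  next strip; interlacing of \<open>P j\<close> and \<open>P (j + 1)\<close> makes it a lattice word.\<close>

lemma chain_word_lattice_word:
  assumes r: "1 \<le> r"
  shows "lattice_word d (chain_word n d P)"
  unfolding lattice_word_def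
proof (intro allI impI)
  fix k c assume c: "1 \<le> c \<and> c < d"
  let ?w = "chain_word n d P"
  show "count_list (take k ?w) (Suc c) \<le> count_list (take k ?w) c"
  proof (cases "r * n \<le> k")
    case True
    then have "take k ?w = take (r * n) ?w" using length_chain_word by simp
    then show ?thesis
      using count_take_chain_word[OF order_refl] c regular_chain_decreasing[OF W order_refl, of "c - 1"]
      by simp
  next
    case False
    define j t where "j = k div r" and "t = k mod r"
    have kjt: "k = r * j + t" and t: "t < r" unfolding j_def t_def using r by simp_all
    then have jn: "j < n" using False by (metis add_lessD1 mult_less_cancel1 not_le)
    note tk = take_chain_word[OF jn less_imp_le[OF t], folded kjt]
    have h: "horizontal_strip (P j) (P (Suc j))" using regular_chain_strip[OF W jn] .
    have "count_list (take k ?w) (Suc c) \<le> P j c + (P (Suc j) c - P j c)"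
      using tk count_take_chain_word[of j "Suc c"] jn c count_strip_word[of d "P j" "P (Suc j)" "Suc c"]
        count_list_take_le[of t "strip_word d (P j) (P (Suc j))" "Suc c"]
      by simp
    also have "\<dots> = P (Suc j) c" using horizontal_stripD(1)[OF h, of c] by simp
    also have "\<dots> \<le> P j (c - 1)" using horizontal_stripD(2)[OF h, of "c - 1"] c by simp
    also have "\<dots> \<le> count_list (take k ?w) c" using tk count_take_chain_word[of j c] jn c by simp
    finally show ?thesis .
  qed
qed

end

definition prefix_chain :: "nat \<Rightarrow> nat \<Rightarrow> nat list \<Rightarrow> nat \<Rightarrow> nat \<Rightarrow> nat" where
  "prefix_chain r d w j k = (if k < d then count_list (take (r * j) w) (Suc k) else 0)"

lemma block_lattice_word_block_sorted:
  assumes w: "block_lattice_word n r d w" and j: "j < n"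
  shows "sorted_wrt (\<ge>) (take r (drop (r * j) w))"
proof -
  let ?B = "take r (drop (r * j) w)"
  have lw: "length w = r * n" and dec: "blocks_decreasing n r w"
    using w unfolding block_lattice_word_def by auto
  have "r * j + r \<le> r * n" using j by (metis add.commute mult_Suc_right mult_le_mono2 Suc_leI)
  then have lB: "length ?B = r" using lw by simp
  have "?B ! i \<ge> ?B ! Suc i" if i: "Suc i < length ?B" for i
  proof -
    have "w ! (r * (Suc j - 1) + Suc i - 1) \<ge> w ! (r * (Suc j - 1) + Suc i)"
      using dec i lB j unfolding blocks_decreasing_def by (metis Suc_leI atLeastAtMost_iff le_add1 plus_1_eq_Suc)
    moreover have "r * j \<le> length w" using lw j by simp
    ultimately show ?thesis using i lB by (simp add: nth_take nth_drop)
  qed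
  then show ?thesis by (subst sorted_wrt_iff_nth_Suc_transp) (auto simp: transp_def)
qed

text \<open>Cut the \<open>(j+1)\<close>-st block after its letters \<open>\<ge> k + 2\<close>: there the lattice property bounds the
  letters \<open>k + 2\<close> of the whole block by the letters \<open>k + 1\<close> of the first \<open>j\<close> blocks.\<close>

lemma prefix_chain_strip:
  assumes w: "block_lattice_word n r d w" and j: "j < n"
  shows "horizontal_strip (prefix_chain r d w j) (prefix_chain r d w (Suc j))"
proof -
  let ?P = "prefix_chain r d w"
  have lat: "lattice_word d w" using w unfolding block_lattice_word_def by simp
  have "?P j k \<le> ?P (Suc j) k" for k
  proof -
    have "take (r * j) w = take (r * j) (take (r * Suc j) w)" by (simp add: min_def)
    then show ?thesis unfolding prefix_chain_def using count_list_take_le by (metis order_refl)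
  qed
  moreover have "?P (Suc j) (Suc k) \<le> ?P j k" for k
  proof (cases "Suc k < d")
    case False then show ?thesis unfolding prefix_chain_def by simp
  next
    case True
    let ?B = "take r (drop (r * j) w)"
    define t where "t = length (takeWhile (\<lambda>x. Suc (Suc k) \<le> x) ?B)"
    have tr: "t \<le> r" unfolding t_def by (metis length_takeWhile_le length_take min.bounded_iff nle_le)
    have "take t ?B = takeWhile (\<lambda>x. Suc (Suc k) \<le> x) ?B" "drop t ?B = dropWhile (\<lambda>x. Suc (Suc k) \<le> x) ?B"
      unfolding t_def by (metis append_eq_conv_conj takeWhile_dropWhile_id)+
    then have no_k: "count_list (take t ?B) (Suc k) = 0"
      and no_Suc_k: "count_list (drop t ?B) (Suc (Suc k)) = 0"
      using dropWhile_sorted_ge_less[OF block_lattice_word_block_sorted[OF w j]]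
      by (auto simp: count_list_0_iff dest: set_takeWhileD)
    have prefix: "take (r * j + t) w = take (r * j) w @ take t ?B" using take_block_split[OF tr] .
    have full: "take (r * Suc j) w = take (r * j) w @ ?B"
      using take_block_split[of r r j w] by (simp add: add.commute)
    have "count_list (take (r * j + t) w) (Suc (Suc k)) \<le> count_list (take (r * j + t) w) (Suc k)"
      using lat True unfolding lattice_word_def by simp
    moreover have "count_list ?B (Suc (Suc k)) = count_list (take t ?B) (Suc (Suc k))"
      using no_Suc_k by (metis add_0_right append_take_drop_id count_list_append)
    ultimately have "count_list (take (r * Suc j) w) (Suc (Suc k)) \<le> count_list (take (r * j) w) (Suc k)"
      using prefix full no_k by simp
    then show ?thesis unfolding prefix_chain_def using True by simp
  qed
  ultimately show ?thesis unfolding horizontal_strip_def by auto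
qed

lemma prefix_chain_regular:
  assumes w: "block_lattice_word n r d w" and dK: "d \<le> K"
  shows "regular_chain n r d K (prefix_chain r d w)"
proof -
  let ?P = "prefix_chain r d w"
  have lw: "length w = r * n" and sw: "set w \<subseteq> {1..d}"
    using w unfolding block_lattice_word_def by auto
  have zero: "\<forall>j\<le>n. \<forall>k\<ge>d. ?P j k = 0" unfolding prefix_chain_def by auto
  have "part_size K (?P j) = r * j" if "j \<le> n" for j
  proof -
    have "part_size K (?P j) = (\<Sum>k<d. ?P j k)" using part_size_eq_sum[OF dK] zero that by blast
    also have "\<dots> = (\<Sum>k<d. count_list (take (r * j) w) (Suc k))" unfolding prefix_chain_def by simp
    also have "\<dots> = length (take (r * j) w)"
      using sum_count_list_letters sw by (meson order_trans set_take_subset)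
    also have "\<dots> = r * j" using lw that by simp
    finally show ?thesis .
  qed
  moreover have "?P 0 = (\<lambda>_. 0)" unfolding prefix_chain_def by auto
  ultimately show ?thesis
    unfolding regular_chain_def strip_chain_def using zero prefix_chain_strip[OF w] dK by auto
qed

text \<open>A block of a block lattice word is decreasing, so it is determined by its content.\<close>

lemma strip_word_prefix_chain:
  assumes w: "block_lattice_word n r d w" and j: "j < n"
  shows "strip_word d (prefix_chain r d w j) (prefix_chain r d w (Suc j)) = take r (drop (r * j) w)"
    (is "?b = ?B")
proof -
  have sw: "set w \<subseteq> {1..d}" using w unfolding block_lattice_word_def by auto
  have full: "take (r * Suc j) w = take (r * j) w @ ?B"
    using take_block_split[of r r j w] by (simp add: add.commute)
  have "count_list ?b x = count_list ?B x" for x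
  proof (cases "1 \<le> x \<and> x \<le> d")
    case True
    then have "x - 1 < d" by arith
    then show ?thesis using full True unfolding count_strip_word prefix_chain_def by simp
  next
    case False
    then have "x \<notin> set ?B" using sw by (meson atLeastAtMost_iff in_set_dropD in_set_takeD subsetD)
    then show ?thesis using False unfolding count_strip_word by auto
  qed
  then have "mset (rev ?b) = mset (rev ?B)" by (simp add: multiset_eq_iff count_mset)
  moreover have "sorted (rev ?b)" using sorted_strip_word by (simp add: sorted_wrt_rev)
  moreover have "sorted (rev ?B)" using block_lattice_word_block_sorted[OF w j] by (simp add: sorted_wrt_rev)
  ultimately have "rev ?b = rev ?B" using properties_for_sort sorted_sort_id by metis
  then show ?thesis by simp
qed

lemma chain_word_prefix_chain:
  assumes w: "block_lattice_word n r d w" and r: "1 \<le> r" and dK: "d \<le> K"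
  shows "chain_word n d (prefix_chain r d w) = w"
proof (rule nth_equalityI)
  let ?P = "prefix_chain r d w"
  have W: "regular_chain n r d K ?P" using prefix_chain_regular[OF w dK] .
  have lw: "length w = r * n" using w unfolding block_lattice_word_def by auto
  show "length (chain_word n d ?P) = length w" using length_chain_word[OF W] lw by simp
  fix i assume "i < length (chain_word n d ?P)"
  then have i: "i < r * n" using length_chain_word[OF W] by simp
  define j t where "j = i div r" and "t = i mod r"
  have ijt: "i = r * j + t" and t: "t < r" unfolding j_def t_def using r by simp_all
  then have jn: "j < n" using i by (metis add_lessD1 mult_less_cancel1)
  have "chain_word n d ?P ! i = strip_word d (?P j) (?P (Suc j)) ! t"
    using nth_chain_word[OF W jn t] ijt by simp
  also have "\<dots> = w ! i"
    using strip_word_prefix_chain[OF w jn] lw jn t ijt by (simp add: nth_take nth_drop)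
  finally show "chain_word n d ?P ! i = w ! i" .
qed

section \<open>Walks in the Weyl chamber\<close>

lemma pos_first_half: "k \<le> length as \<Longrightarrow> pos (as, bs) k c = int (count_list (take k as) c)"
  unfolding pos_def by simp

text \<open>A walk that returns to the origin, read backwards, is again a walk from the origin.\<close>

lemma pos_second_half:
  assumes "length as = m" "length bs = m" "t \<le> m" "count_list as c = count_list bs c"
  shows "pos (as, bs) (m + t) c = int (count_list (take (m - t) (rev bs)) c)"
proof -
  have "count_list (take (m - t) (rev bs)) c = count_list (drop t bs) c"
    using assms(2,3) by (simp add: take_rev)
  moreover have "count_list bs c = count_list (take t bs) c + count_list (drop t bs) c"
    by (metis append_take_drop_id count_list_append)
  ultimately show ?thesis using assms unfolding pos_def by simp
qed

lemma lattice_word_iff_prefixes: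
  "lattice_word d w \<longleftrightarrow>
     (\<forall>k\<le>length w. \<forall>c. 1 \<le> c \<and> c < d \<longrightarrow> count_list (take k w) (Suc c) \<le> count_list (take k w) c)"
  unfolding lattice_word_def
proof (intro iffI allI impI)
  fix k c
  assume "\<forall>k\<le>length w. \<forall>c. 1 \<le> c \<and> c < d \<longrightarrow> count_list (take k w) (Suc c) \<le> count_list (take k w) c"
    and "1 \<le> c \<and> c < d"
  moreover have "take k w = take (min k (length w)) w" by (simp add: min_def)
  ultimately show "count_list (take k w) (Suc c) \<le> count_list (take k w) c"
    by (metis min.cobounded2)
qed auto

context
  fixes as bs :: "nat list" and m :: nat
  assumes la: "length as = m" and lb: "length bs = m"
    and content: "\<forall>c. count_list as c = count_list bs c"
begin

lemma lattice_words_if_stays_in_weyl_chamber: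
  assumes "stays_in (as, bs) (weyl_chamber d)"
  shows "lattice_word d as" "lattice_word d (rev bs)"
proof -
  have stays: "pos (as, bs) k (Suc c) \<le> pos (as, bs) k c" if "k \<le> m + m" "1 \<le> c \<and> c < d" for k c
    using assms la lb that unfolding stays_in_def weyl_chamber_def by simp
  show "lattice_word d as" unfolding lattice_word_iff_prefixes
  proof (intro allI impI)
    fix k c assume k: "k \<le> length as" and c: "1 \<le> c \<and> c < d"
    then show "count_list (take k as) (Suc c) \<le> count_list (take k as) c"
      using stays[of k c] pos_first_half[OF k] la by simp
  qed
  show "lattice_word d (rev bs)" unfolding lattice_word_iff_prefixes
  proof (intro allI impI)
    fix k c assume k: "k \<le> length (rev bs)" and c: "1 \<le> c \<and> c < d"
    have km: "m - k \<le> m" "m - (m - k) = k" using k lb by auto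
    then show "count_list (take k (rev bs)) (Suc c) \<le> count_list (take k (rev bs)) c"
      using stays[of "m + (m - k)" c] c pos_second_half[OF la lb km(1)] content by simp
  qed
qed

lemma stays_in_weyl_chamber_if_lattice_words:
  assumes "lattice_word d as" "lattice_word d (rev bs)"
  shows "stays_in (as, bs) (weyl_chamber d)"
  unfolding stays_in_def weyl_chamber_def
proof (intro allI impI CollectI)
  fix k c assume k: "k \<le> length (fst (as, bs)) + length (snd (as, bs))" and c: "1 \<le> c \<and> c < d"
  show "pos (as, bs) k (Suc c) \<le> pos (as, bs) k c"
  proof (cases "k \<le> m")
    case True
    then show ?thesis using pos_first_half[of k as bs] la assms c unfolding lattice_word_def by simp
  next
    case False
    then obtain t where "k = m + t" "t \<le> m" using k la lb by (metis add_le_cancel_left fst_conv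
        le_add_diff_inverse nle_le snd_conv)
    then show ?thesis using pos_second_half[OF la lb] content assms c unfolding lattice_word_def by simp
  qed
qed

end

lemma mem_walks_tilde_iff: "(as, bs) \<in> walks_tilde n r d \<longleftrightarrow> (as, rev bs) \<in> walks_prime n r d"
proof
  assume "(as, bs) \<in> walks_tilde n r d"
  then obtain a b where "(a, b) \<in> walks_prime n r d" "as = a" "bs = rev b"
    unfolding walks_tilde_def by auto
  then show "(as, rev bs) \<in> walks_prime n r d" by simp
next
  assume "(as, rev bs) \<in> walks_prime n r d"
  moreover have "(as, bs) = (\<lambda>(as, bs). (as, rev bs)) (as, rev bs)" by simp
  ultimately show "(as, bs) \<in> walks_tilde n r d" unfolding walks_tilde_def by (rule rev_image_eqI)
qed

lemma pos_end_eq_0_iff: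
  assumes "length as = m" "length bs = m" "set as \<subseteq> {1..d}" "set bs \<subseteq> {1..d}"
  shows "(\<forall>c\<in>{1..d}. pos (as, bs) (2 * m) c = 0) \<longleftrightarrow> (\<forall>c. count_list as c = count_list bs c)"
proof -
  have pos_end: "pos (as, bs) (2 * m) c = int (count_list as c) - int (count_list bs c)" for c
    using assms(1,2) unfolding pos_def by simp
  have "count_list as c = count_list bs c" if "c \<notin> {1..d}" for c
    using that assms(3,4) by (metis count_notin subsetD)
  then show ?thesis unfolding pos_end by auto
qed

lemma mem_walks_prime_iff:
  "(as, bs) \<in> walks_prime n r d \<longleftrightarrow>
     length as = r * n \<and> length bs = r * n \<and> set as \<subseteq> {1..d} \<and> set bs \<subseteq> {1..d} \<and>
     (\<forall>c. count_list as c = count_list bs c) \<and> blocks_decreasing n r as \<and> blocks_decreasing n r bs"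
  using pos_end_eq_0_iff[of as "r * n" bs d]
  unfolding walks_prime_def walks_star_def blocks_decreasing_def by blast

lemma mem_chamber_walks_iff:
  "(as, bs) \<in> {w \<in> walks_tilde n r d. stays_in w (weyl_chamber d)} \<longleftrightarrow>
     block_lattice_word n r d as \<and> block_lattice_word n r d (rev bs) \<and>
     (\<forall>c. count_list as c = count_list bs c)"
proof -
  have "stays_in (as, bs) (weyl_chamber d) \<longleftrightarrow> lattice_word d as \<and> lattice_word d (rev bs)"
    if "length as = r * n" "length bs = r * n" "\<forall>c. count_list as c = count_list bs c"
    using lattice_words_if_stays_in_weyl_chamber[OF that] stays_in_weyl_chamber_if_lattice_words[OF that]
    by blast
  then show ?thesis
    unfolding mem_Collect_eq mem_walks_tilde_iff mem_walks_prime_iff block_lattice_word_def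
    by auto
qed

section \<open>Configurations and the bijection\<close>

lemma assoc_config_edge:
  assumes "u \<in> {1..n}" "v \<in> {1..n}"
  shows "{p \<in> assoc_config n G. fst (fst p) = u \<and> fst (snd p) = v} =
    (\<lambda>s. ((u, (\<Sum>v'\<in>{v<..n}. G u v') + s), (v, (\<Sum>u'\<in>{u<..n}. G u' v) + G u v - s + 1))) ` {1..G u v}"
  using assms unfolding assoc_config_def by force

lemma card_assoc_config_edge:
  assumes "u \<in> {1..n}" "v \<in> {1..n}"
  shows "card {p \<in> assoc_config n G. fst (fst p) = u \<and> fst (snd p) = v} = G u v"
  unfolding assoc_config_edge[OF assms] by (subst card_image) (auto intro: inj_onI)

lemma multigraphs_zero: "G \<in> multigraphs n r d \<Longrightarrow> u \<notin> {1..n} \<or> v \<notin> {1..n} \<Longrightarrow> G u v = 0"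
  unfolding multigraphs_def regular_multigraph_def by blast

lemma inj_on_assoc_config: "inj_on (assoc_config n) (multigraphs n r d)"
proof (rule inj_onI, rule ext, rule ext)
  fix G G' u v
  assume G: "G \<in> multigraphs n r d" and G': "G' \<in> multigraphs n r d"
    and eq: "assoc_config n G = assoc_config n G'"
  show "G u v = G' u v"
  proof (cases "u \<in> {1..n} \<and> v \<in> {1..n}")
    case True
    then show ?thesis using card_assoc_config_edge[of u n v G] card_assoc_config_edge[of u n v G'] eq by simp
  next
    case False
    then show ?thesis using multigraphs_zero[OF G] multigraphs_zero[OF G'] by simp
  qed
qed

lemma regular_multigraph_rect_sum_top:
  assumes "regular_multigraph n r G"
  shows "j \<le> n \<Longrightarrow> rect_sum G n j = r * j"
proof (induction j)
  case (Suc j)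
  then show ?case using assms rect_sum_Suc_right[of G n j] unfolding regular_multigraph_def by simp
qed simp

lemma regular_multigraph_rect_sum_right:
  assumes "regular_multigraph n r G"
  shows "i \<le> n \<Longrightarrow> rect_sum G i n = r * i"
proof (induction i)
  case (Suc i)
  then show ?case using assms rect_sum_Suc_left[of G i n] unfolding regular_multigraph_def by simp
qed simp

lemma regular_multigraphI_rect_sum:
  assumes zero: "\<And>u v. u \<notin> {1..n} \<or> v \<notin> {1..n} \<Longrightarrow> G u v = 0"
    and top: "\<And>j. j \<le> n \<Longrightarrow> rect_sum G n j = r * j"
    and right: "\<And>i. i \<le> n \<Longrightarrow> rect_sum G i n = r * i"
  shows "regular_multigraph n r G"
proof -
  have "(\<Sum>u\<in>{1..n}. G u v) = r" if "v \<in> {1..n}" for v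
  proof -
    define j where "j = v - 1"
    then have "v = Suc j" "j < n" using that by auto
    then show ?thesis using rect_sum_Suc_right[of G n j] top[of j] top[of "Suc j"] by simp
  qed
  moreover have "(\<Sum>v\<in>{1..n}. G u v) = r" if "u \<in> {1..n}" for u
  proof -
    define i where "i = u - 1"
    then have "u = Suc i" "i < n" using that by auto
    then show ?thesis using rect_sum_Suc_left[of G i n] right[of i] right[of "Suc i"] by simp
  qed
  ultimately show ?thesis unfolding regular_multigraph_def using zero by blast
qed

lemma growth_boundary_regular_chain:
  assumes G: "G \<in> multigraphs n r d" and K: "n < K" "d \<le> K"
  shows "regular_chain n r d K (\<lambda>j. growth K G n j)" "regular_chain n r d K (\<lambda>i. growth K G i n)"
proof -
  have reg: "regular_multigraph n r G" and "L G \<le> d" using G unfolding multigraphs_def by auto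
  then have "lpm G n n \<le> d" using L_eq_lpm by simp
  then have corner: "growth K G n n k = 0" if "d \<le> k" for k
    using growth_num_rows[OF K(1), of G n] that by (simp add: num_rows_zero_iff)
  have "strip_chain n d (\<lambda>j. growth K G n j)"
    unfolding strip_chain_def using growth_strip_right[OF K(1)] corner by auto
  moreover have "strip_chain n d (\<lambda>i. growth K G i n)"
    unfolding strip_chain_def using growth_strip_up K(1) corner by auto
  moreover have "part_size K (growth K G n j) = r * j" "part_size K (growth K G j n) = r * j" if "j \<le> n" for j
    using growth_size[OF K(1)] growth_size[of j K] regular_multigraph_rect_sum_top[OF reg that]
      regular_multigraph_rect_sum_right[OF reg that] that K(1)
    by simp_all
  moreover have "growth K G n j k = 0" "growth K G j n k = 0" if "j \<le> n" "d \<le> k" for j k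
    using strip_chain_mono[OF calculation(1) that(1), of k] strip_chain_mono[OF calculation(2) that(1), of k]
      corner[OF that(2)]
    by simp_all
  ultimately show "regular_chain n r d K (\<lambda>j. growth K G n j)" "regular_chain n r d K (\<lambda>i. growth K G i n)"
    unfolding regular_chain_def using K(2) by simp_all
qed

lemma regular_chain_eq_if_chain_word_eq:
  assumes P: "regular_chain n r d K P" and P': "regular_chain n r d K P'"
    and eq: "chain_word n d P = chain_word n d P'" and j: "j \<le> n"
  shows "P j = P' j"
proof
  fix k
  show "P j k = P' j k"
  proof (cases "k < d")
    case True
    then show ?thesis using count_take_chain_word[OF P j, of "Suc k"] count_take_chain_word[OF P' j, of "Suc k"] eq
      by simp
  next
    case False
    then show ?thesis using P P' j unfolding regular_chain_def by simp
  qed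
qed

lemma growth_back_matrix_boundary:
  assumes P: "strip_chain n d P" and Q: "strip_chain n d Q" and PQ: "P n = Q n"
    and n: "1 \<le> n" and dK: "d < K"
  shows "j \<le> n \<Longrightarrow> growth K (back_matrix n P Q K) n j = P j"
    "i \<le> n \<Longrightarrow> growth K (back_matrix n P Q K) i n = Q i"
proof -
  note diagram = growth_back_matrix[OF P Q PQ n dK]
  show "j \<le> n \<Longrightarrow> growth K (back_matrix n P Q K) n j = P j" using diagram[of n j] by simp
  assume i: "i \<le> n"
  show "growth K (back_matrix n P Q K) i n = Q i"
  proof (cases "i = n")
    case True then show ?thesis using diagram[of n n] PQ by simp
  next
    case False
    then have "n - i = Suc (n - Suc i)" "n - Suc (n - Suc i) = i" using i by arith+
    then show ?thesis using diagram[OF i, of n] by simp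
  qed
qed

text \<open>Any number \<open>K > max n d\<close> of rows leaves room for all diagrams that occur.\<close>

definition rsk_walk :: "nat \<Rightarrow> nat \<Rightarrow> (nat \<Rightarrow> nat \<Rightarrow> nat) \<Rightarrow> nat list \<times> nat list" where
  "rsk_walk n d G =
     (chain_word n d (\<lambda>j. growth (n + d + 1) G n j), rev (chain_word n d (\<lambda>i. growth (n + d + 1) G i n)))"

lemma rsk_walk_in_chamber_walks:
  assumes G: "G \<in> multigraphs n r d" and r: "1 \<le> r"
  shows "rsk_walk n d G \<in> {w \<in> walks_tilde n r d. stays_in w (weyl_chamber d)}"
proof -
  define K where "K = n + d + 1"
  have "n < K" "d \<le> K" unfolding K_def by simp_all
  note chains = growth_boundary_regular_chain[OF G this]
  have "block_lattice_word n r d (chain_word n d P)" if "regular_chain n r d K P" for P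
    unfolding block_lattice_word_def
    using length_chain_word[OF that] set_chain_word chain_word_blocks_decreasing[OF that]
      chain_word_lattice_word[OF that r]
    by simp
  then show ?thesis
    unfolding rsk_walk_def K_def[symmetric] mem_chamber_walks_iff
    using chains count_chain_word[OF chains(1)] count_chain_word[OF chains(2)] by simp
qed

lemma inj_on_rsk_walk: "inj_on (rsk_walk n d) (multigraphs n r d)"
proof (rule inj_onI)
  fix G G' assume G: "G \<in> multigraphs n r d" and G': "G' \<in> multigraphs n r d"
    and eq: "rsk_walk n d G = rsk_walk n d G'"
  define K where "K = n + d + 1"
  have K: "n < K" "d \<le> K" unfolding K_def by simp_all
  note chains = growth_boundary_regular_chain[OF G K] and chains' = growth_boundary_regular_chain[OF G' K]
  have "chain_word n d (\<lambda>j. growth K G n j) = chain_word n d (\<lambda>j. growth K G' n j)"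
    and "chain_word n d (\<lambda>i. growth K G i n) = chain_word n d (\<lambda>i. growth K G' i n)"
    using eq unfolding rsk_walk_def K_def by auto
  note top = regular_chain_eq_if_chain_word_eq[OF chains(1) chains'(1) this(1)]
    and right = regular_chain_eq_if_chain_word_eq[OF chains(2) chains'(2) this(2)]
  show "G = G'"
  proof (rule ext, rule ext)
    fix u v
    show "G u v = G' u v"
    proof (cases "u \<in> {1..n} \<and> v \<in> {1..n}")
      case True
      define i j where "i = u - 1" and "j = v - 1"
      then have "u = Suc i" "v = Suc j" "i < n" "j < n" using True by auto
      then show ?thesis using growth_determined_by_boundary[OF K(1) top right] by auto
    next
      case False
      then show ?thesis using multigraphs_zero[OF G] multigraphs_zero[OF G'] by simp
    qed
  qed
qed

lemma chain_word_cong: "(\<And>j. j \<le> n \<Longrightarrow> P j = P' j) \<Longrightarrow> chain_word n d P = chain_word n d P'"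
  unfolding chain_word_def by (intro arg_cong[where f = concat] map_cong) auto

lemma back_matrix_multigraph:
  assumes P: "regular_chain n r d K P" and Q: "regular_chain n r d K Q" and PQ: "P n = Q n"
    and n: "1 \<le> n" and K: "n < K" "d < K"
  shows "back_matrix n P Q K \<in> multigraphs n r d"
proof -
  let ?G = "back_matrix n P Q K"
  have chains: "strip_chain n d P" "strip_chain n d Q" using P Q unfolding regular_chain_def by auto
  note top = growth_back_matrix_boundary(1)[OF chains PQ n K(2)]
    and right = growth_back_matrix_boundary(2)[OF chains PQ n K(2)]
  have "regular_multigraph n r ?G"
  proof (rule regular_multigraphI_rect_sum)
    show "?G u v = 0" if "u \<notin> {1..n} \<or> v \<notin> {1..n}" for u v
      using that unfolding back_matrix_def by auto
    show "rect_sum ?G n j = r * j" if "j \<le> n" for j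
      using growth_size[OF K(1), of ?G j] top[OF that] P that unfolding regular_chain_def by simp
    show "rect_sum ?G i n = r * i" if "i \<le> n" for i
      using growth_size[of i K ?G n] right[OF that] Q that K(1) unfolding regular_chain_def by simp
  qed
  moreover have "growth K ?G n n d = 0" using top[of n] P unfolding regular_chain_def by simp
  then have "lpm ?G n n \<le> d" using num_rows_zero_iff[OF growth_num_rows[OF K(1)]] by blast
  ultimately show ?thesis unfolding multigraphs_def using L_eq_lpm by simp
qed

lemma rsk_walk_surj:
  assumes r: "1 \<le> r" and n: "1 \<le> n"
    and w: "(as, bs) \<in> {w \<in> walks_tilde n r d. stays_in w (weyl_chamber d)}"
  shows "\<exists>G\<in>multigraphs n r d. rsk_walk n d G = (as, bs)"
proof -
  define K where "K = n + d + 1"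
  have K: "n < K" "d < K" unfolding K_def by simp_all
  have as: "block_lattice_word n r d as" and bs: "block_lattice_word n r d (rev bs)"
    and content: "\<forall>c. count_list as c = count_list bs c"
    using w unfolding mem_chamber_walks_iff by auto
  define P Q where "P = prefix_chain r d as" and "Q = prefix_chain r d (rev bs)"
  have chains: "regular_chain n r d K P" "regular_chain n r d K Q"
    unfolding P_def Q_def using prefix_chain_regular as bs K(2) by auto
  have "length as = r * n" "length bs = r * n" using as bs unfolding block_lattice_word_def by auto
  then have PQ: "P n = Q n" unfolding P_def Q_def prefix_chain_def using content by auto
  define G where "G = back_matrix n P Q K"
  have "chain_word n d (\<lambda>j. growth K G n j) = as" "chain_word n d (\<lambda>i. growth K G i n) = rev bs"
    using chain_word_cong[of n "\<lambda>j. growth K G n j" P d] chain_word_cong[of n "\<lambda>i. growth K G i n" Q d]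
      growth_back_matrix_boundary[of n d P Q K] chains PQ n K(2)
      chain_word_prefix_chain[OF as r, of K] chain_word_prefix_chain[OF bs r, of K] K(2)
    unfolding G_def P_def Q_def regular_chain_def by auto
  then have "rsk_walk n d G = (as, bs)" unfolding rsk_walk_def K_def[symmetric] by simp
  moreover have "G \<in> multigraphs n r d"
    unfolding G_def using back_matrix_multigraph[OF chains PQ n K] .
  ultimately show ?thesis by blast
qed

lemma bij_betw_rsk_walk:
  assumes "1 \<le> n" "1 \<le> r"
  shows "bij_betw (rsk_walk n d) (multigraphs n r d) {w \<in> walks_tilde n r d. stays_in w (weyl_chamber d)}"
  unfolding bij_betw_def
proof (intro conjI inj_on_rsk_walk equalityI subsetI)
  show "w \<in> {w \<in> walks_tilde n r d. stays_in w (weyl_chamber d)}" if "w \<in> rsk_walk n d ` multigraphs n r d" for w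
    using that rsk_walk_in_chamber_walks assms(2) by blast
  show "w \<in> rsk_walk n d ` multigraphs n r d" if "w \<in> {w \<in> walks_tilde n r d. stays_in w (weyl_chamber d)}" for w
    using that rsk_walk_surj[OF assms(2,1)] by (cases w) force
qed

theorem theorem6:
  fixes n r d :: nat
  assumes "n \<ge> 1" and "r \<ge> 1" and "d \<ge> 1"
  shows "\<exists>f. bij_betw f (configs n r d)
                {w \<in> walks_tilde n r d. stays_in w (weyl_chamber d)}"
proof -
  have "bij_betw (assoc_config n) (multigraphs n r d) (configs n r d)"
    unfolding configs_def using inj_on_assoc_config by (rule inj_on_imp_bij_betw)
  from bij_betw_trans[OF bij_betw_the_inv_into[OF this] bij_betw_rsk_walk[OF assms(1,2)]]
  show ?thesis by blast
qed

end
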